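(* Let $M$ be a commutative monoid with identity $e$ and $\mathcal{A}$ an $\mathbb{H}M$-module. Then for every $n\ge0$ the group $H^n(M,1;\mathcal{A})$ is isomorphic to the $n$-th cohomology group of the cochain complex $C(M,1;\mathcal{A})$ defined as follows: $C^0(M,1;\mathcal{A})=\mathcal{A}(e)$; for $n\ge1$, $C^n(M,1;\mathcal{A})$ is the abelian group (pointwise addition) of functions $f:M^n\to\bigcup_{x\in M}\mathcal{A}(x)$ with $f(x_1,\dots,x_n)\in\mathcal{A}(x_1\cdots x_n)$ and $f(x_1,\dots,x_n)=0$ whenever some $x_i=e$; $\partial^0=0$; and for $n\ge1$, $(\partial^nf)(x_1,\dots,x_{n+1})=x_{1*}f(x_2,\dots,x_{n+1})+\sum_{i=1}^n(-1)^if(x_1,\dots,x_ix_{i+1},\dots,x_{n+1})+(-1)^{n+1}x_{n+1*}f(x_1,\dots,x_n)$.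
   Context: Let $M$ be a commutative monoid with identity $e$. $\mathbb{H}M$ is the category with objects the elements of $M$ and morphisms $(x,y):x\to xy$, composition $(xy,z)(x,y)=(x,yz)$. An $\mathbb{H}M$-module $\mathcal{A}$ is a functor $\mathbb{H}M\to\mathbf{Ab}$: abelian groups $\mathcal{A}(x)$ with homomorphisms $y_*:\mathcal{A}(x)\to\mathcal{A}(xy)$, $y_*z_*=(yz)_*$, $e_*=\mathrm{id}$. Tensor product: $(\mathcal{A}\otimes_{\mathbb{H}M}\mathcal{B})(x)$ is the quotient of $\bigoplus_{zt=x}\mathcal{A}(z)\otimes\mathcal{B}(t)$ by the relations $u_*a\otimes b=a\otimes u_*b$, with $y_*(a\otimes b)=y_*a\otimes b$; unit the constant module $\mathbb{Z}$. Nonnegative chain complexes of $\mathbb{H}M$-modules form a symmetric monoidal category (graded tensor product, Leibniz differential, Koszul sign symmetry). A commutative DGA-algebra over $\mathbb{H}M$ is a commutative monoid $(\mathcal{A},\circ,\iota:\mathbb{Z}\to\mathcal{A})$ in it with a monoid morphism $\epsilon:\mathcal{A}\to\mathbb{Z}$; write $\epsilon_x(a)=\tilde\epsilon(a)\cdot x$ with $\tilde\epsilon(a)\in\mathbb{Z}$. Bar construction: $\bar{\mathcal{A}}=\mathrm{coker}\,\iota$. $\mathbf{B}(\mathcal{A})_n(x)$ is generated by $[\,]$ (in degree $0$, with $\mathbf{B}(\mathcal{A})_0\cong\mathbb{Z}$) and by symbols $[a_1|\cdots|a_p]$, $p\ge1$, $a_i\in\bar{\mathcal{A}}_{r_i}(x_i)$,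 $x_1\cdots x_p=x$, $p+\sum r_i=n$ (i.e. $\mathbf{B}(\mathcal{A})=\bigoplus_p$ of the $p$-fold tensor powers over $\mathbb{H}M$ of the suspension of $\bar{\mathcal{A}}$), with differential $\partial[a_1|\cdots|a_p]=-\sum_i(-1)^{e_{i-1}}[a_1|\cdots|\partial a_i|\cdots|a_p]+\tilde\epsilon(a_1)x_{1*}[a_2|\cdots|a_p]+\sum_{i=1}^{p-1}(-1)^{e_i}[a_1|\cdots|a_i\circ a_{i+1}|\cdots|a_p]+(-1)^{e_p}\tilde\epsilon(a_p)x_{p*}[a_1|\cdots|a_{p-1}]$, $e_i=i+r_1+\dots+r_i$; multiplication the shuffle product $[a_1|\cdots|a_p]\circ[a_{p+1}|\cdots|a_{p+q}]=\sum_\sigma(-1)^{e(\sigma)}[a_{\sigma^{-1}(1)}|\cdots|a_{\sigma^{-1}(p+q)}]$ over $(p,q)$-shuffles, $e(\sigma)=\sum(1+r_i)(1+r_{p+j})$ over pairs with $\sigma(i)>\sigma(p+j)$; unit $[\,]$; augmentation the isomorphism $\mathbf{B}(\mathcal{A})_0\cong\mathbb{Z}$. $\mathbf{B}(\mathcal{A})$ is again a commutative DGA-algebra over $\mathbb{H}M$, so $\mathbf{B}^r$ is defined. $\mathcal{Z}M$: the $\mathbb{H}M$-module with $\mathcal{Z}M(x)$ free abelian on pairs $(u,v)\in M^2$ with $uv=x$, $y_*(u,v)=(yu,v)$, multiplication $(u,v)\circ(w,t)=(uw,vt)$, unit $(e,e)$, concentrated in degree $0$, augmentation $(u,v)\mapsto$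 generator of $\mathbb{Z}(x)$. For $r\ge1$: $H^n(M,r;\mathcal{A})=H^n(\mathrm{Hom}_{\mathbb{H}M}(\mathbf{B}^r(\mathcal{Z}M),\mathcal{A}))$. *)

theory Defs
  imports "HOL-Algebra.Algebra" "HOL-Algebra.Free_Abelian_Groups"
begin

text \<open>The commutative monoid M is a type of class comm_monoid_mult; its identity e is 1.
An HM-module is a family of abelian groups A x (all with elements in one ambient type)
together with maps act x y : A x -> A (x*y) (the map y_* starting at x).\<close>

definition HM_module :: "('m::comm_monoid_mult \<Rightarrow> 'a monoid) \<Rightarrow> ('m \<Rightarrow> 'm \<Rightarrow> 'a \<Rightarrow> 'a) \<Rightarrow> bool" where
  "HM_module A act \<longleftrightarrow>
     (\<forall>x. comm_group (A x)) \<and>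
     (\<forall>x y. act x y \<in> hom (A x) (A (x * y))) \<and>
     (\<forall>x a. a \<in> carrier (A x) \<longrightarrow> act x 1 a = a) \<and>
     (\<forall>x y z a. a \<in> carrier (A x) \<longrightarrow> act (x * y) z (act x y a) = act x (y * z) a)"

definition cohomology :: "(nat \<Rightarrow> 'g monoid) \<Rightarrow> (nat \<Rightarrow> 'g \<Rightarrow> 'g) \<Rightarrow> nat \<Rightarrow> 'g set monoid" where
  "cohomology G d n =
     ((G n)\<lparr>carrier := kernel (G n) (G (Suc n)) (d n)\<rparr>) Mod
       (if n = 0 then {\<one>\<^bsub>G 0\<^esub>} else d (n - 1) ` carrier (G (n - 1)))"

definition ZM :: "'m::comm_monoid_mult \<Rightarrow> (('m \<times> 'm) \<Rightarrow>\<^sub>0 int) monoid" where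
  "ZM x = free_Abelian_group {(u, v). u * v = x}"

definition ZM_act :: "'m::comm_monoid_mult \<Rightarrow> (('m \<times> 'm) \<Rightarrow>\<^sub>0 int) \<Rightarrow> (('m \<times> 'm) \<Rightarrow>\<^sub>0 int)" where
  "ZM_act y a = frag_extend (\<lambda>(u, v). frag_of (y * u, v)) a"

definition ZM_mult :: "(('m::comm_monoid_mult \<times> 'm) \<Rightarrow>\<^sub>0 int) \<Rightarrow> (('m \<times> 'm) \<Rightarrow>\<^sub>0 int) \<Rightarrow> (('m \<times> 'm) \<Rightarrow>\<^sub>0 int)" where
  "ZM_mult a b = frag_extend (\<lambda>p. frag_extend (\<lambda>q. frag_of (fst p * fst q, snd p * snd q)) b) a"

definition ZM_eps :: "(('m::comm_monoid_mult \<times> 'm) \<Rightarrow>\<^sub>0 int) \<Rightarrow> int" where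
  "ZM_eps a = (\<Sum>p\<in>Poly_Mapping.keys a. Poly_Mapping.lookup a p)"

text \<open>A word of length n is a list [(z_1,a_1),...,(z_n,a_n)] with a_i in ZM(z_i); it stands
for the symbol [a_1|...|a_n] in degree x = z_1 ... z_n. Since ZM is concentrated in degree 0,
B(ZM)_n is the n-fold tensor power over HM of coker(iota). B(ZM)_n(x) is realised as the quotient
of the free abelian group on words of length n and degree x by: additivity in each slot
(Z-multilinearity), the HM-relations u_* a_i (x) a_(i+1) = a_i (x) u_* a_(i+1) between adjacent
slots, and the degenerate words (some a_i in the image of iota, i.e. a_i = (z_i, e)),
which gives the tensor power of coker(iota). For n = 0 there is only the empty word [],
in every degree x, so B_0 = the constant module Z.\<close>

type_synonym 'm bword = "('m \<times> (('m \<times> 'm) \<Rightarrow>\<^sub>0 int)) list"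

definition bwords :: "nat \<Rightarrow> 'm::comm_monoid_mult \<Rightarrow> 'm bword set" where
  "bwords n x = {w. length w = n \<and> (\<forall>(z, a) \<in> set w. a \<in> carrier (ZM z)) \<and>
                    (n = 0 \<or> prod_list (map fst w) = x)}"

definition bfree :: "nat \<Rightarrow> 'm::comm_monoid_mult \<Rightarrow> ('m bword \<Rightarrow>\<^sub>0 int) monoid" where
  "bfree n x = free_Abelian_group (bwords n x)"

definition brels :: "nat \<Rightarrow> 'm::comm_monoid_mult \<Rightarrow> ('m bword \<Rightarrow>\<^sub>0 int) set" where
  "brels n x =
     {frag_of (w[i := (fst (w!i), a + b)]) - frag_of (w[i := (fst (w!i), a)]) - frag_of (w[i := (fst (w!i), b)])
        | w i a b. w \<in> bwords n x \<and> i < n \<and> a \<in> carrier (ZM (fst (w!i))) \<and> b \<in> carrier (ZM (fst (w!i)))}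
   \<union> {frag_of (w[i := (u * fst (w!i), ZM_act u (snd (w!i)))])
        - frag_of (w[Suc i := (u * fst (w!Suc i), ZM_act u (snd (w!Suc i)))])
        | w i u. length w = n \<and> (\<forall>(z, a) \<in> set w. a \<in> carrier (ZM z)) \<and> Suc i < n \<and>
                 u * prod_list (map fst w) = x}
   \<union> {frag_of w | w. w \<in> bwords n x \<and> (\<exists>i<n. snd (w!i) = frag_of (fst (w!i), 1))}"

definition bsub :: "nat \<Rightarrow> 'm::comm_monoid_mult \<Rightarrow> ('m bword \<Rightarrow>\<^sub>0 int) set" where
  "bsub n x = generate (bfree n x) (brels n x)"

definition BZM :: "nat \<Rightarrow> 'm::comm_monoid_mult \<Rightarrow> ('m bword \<Rightarrow>\<^sub>0 int) set monoid" where
  "BZM n x = bfree n x Mod bsub n x"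

definition bclass :: "nat \<Rightarrow> 'm::comm_monoid_mult \<Rightarrow> ('m bword \<Rightarrow>\<^sub>0 int) \<Rightarrow> ('m bword \<Rightarrow>\<^sub>0 int) set" where
  "bclass n x r = bsub n x #>\<^bsub>bfree n x\<^esub> r"

definition act_word :: "'m::comm_monoid_mult \<Rightarrow> 'm bword \<Rightarrow> 'm bword" where
  "act_word y w = (if w = [] then [] else (y * fst (hd w), ZM_act y (snd (hd w))) # tl w)"

definition BZM_act :: "nat \<Rightarrow> 'm::comm_monoid_mult \<Rightarrow> 'm \<Rightarrow> ('m bword \<Rightarrow>\<^sub>0 int) set \<Rightarrow> ('m bword \<Rightarrow>\<^sub>0 int) set" where
  "BZM_act n x y c = bclass n (x * y) (frag_extend (\<lambda>w. frag_of (act_word y w)) (SOME r. r \<in> c))"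

text \<open>The bar differential on a word [a_1|...|a_n] (n >= 1, all r_i = 0 so e_i = i and the
internal-differential term vanishes):
 eps(a_1) x_1* [a_2|...|a_n] + sum_(i=1)^(n-1) (-1)^i [...|a_i o a_(i+1)|...]
   + (-1)^n eps(a_n) x_n* [a_1|...|a_(n-1)].\<close>
definition bar_diff_word :: "'m::comm_monoid_mult bword \<Rightarrow> ('m bword \<Rightarrow>\<^sub>0 int)" where
  "bar_diff_word w =
     frag_cmul (ZM_eps (snd (hd w))) (frag_of (act_word (fst (hd w)) (tl w)))
     + (\<Sum>i\<in>{1..<length w}. frag_cmul ((-1) ^ i)
          (frag_of (take (i - 1) w @ [(fst (w!(i-1)) * fst (w!i), ZM_mult (snd (w!(i-1))) (snd (w!i)))] @ drop (Suc i) w)))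
     + frag_cmul ((-1) ^ length w * ZM_eps (snd (last w)))
          (frag_of (act_word (fst (last w)) (butlast w)))"

definition BZM_diff :: "nat \<Rightarrow> 'm::comm_monoid_mult \<Rightarrow> ('m bword \<Rightarrow>\<^sub>0 int) set \<Rightarrow> ('m bword \<Rightarrow>\<^sub>0 int) set" where
  "BZM_diff n x c = bclass (n - 1) x (frag_extend bar_diff_word (SOME r. r \<in> c))"

definition HomB :: "('m::comm_monoid_mult \<Rightarrow> 'a monoid) \<Rightarrow> ('m \<Rightarrow> 'm \<Rightarrow> 'a \<Rightarrow> 'a) \<Rightarrow> nat
                     \<Rightarrow> ('m \<Rightarrow> ('m bword \<Rightarrow>\<^sub>0 int) set \<Rightarrow> 'a) monoid" where
  "HomB A act n =
     \<lparr>carrier = {\<phi>. (\<forall>x. \<phi> x \<in> hom (BZM n x) (A x) \<and> \<phi> x \<in> extensional (carrier (BZM n x))) \<and>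
                    (\<forall>x y c. c \<in> carrier (BZM n x) \<longrightarrow> \<phi> (x * y) (BZM_act n x y c) = act x y (\<phi> x c))},
      monoid.mult = (\<lambda>\<phi> \<psi> x c. if c \<in> carrier (BZM n x) then \<phi> x c \<otimes>\<^bsub>A x\<^esub> \<psi> x c else undefined),
      one = (\<lambda>x c. if c \<in> carrier (BZM n x) then \<one>\<^bsub>A x\<^esub> else undefined)\<rparr>"

definition HomB_diff :: "('m::comm_monoid_mult \<Rightarrow> 'a monoid) \<Rightarrow> nat
                     \<Rightarrow> ('m \<Rightarrow> ('m bword \<Rightarrow>\<^sub>0 int) set \<Rightarrow> 'a) \<Rightarrow> ('m \<Rightarrow> ('m bword \<Rightarrow>\<^sub>0 int) set \<Rightarrow> 'a)" where
  "HomB_diff A n \<phi> = (\<lambda>x c. if c \<in> carrier (BZM (Suc n) x) then \<phi> x (BZM_diff (Suc n) x c) else undefined)"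

definition H_M1 :: "('m::comm_monoid_mult \<Rightarrow> 'a monoid) \<Rightarrow> ('m \<Rightarrow> 'm \<Rightarrow> 'a \<Rightarrow> 'a) \<Rightarrow> nat
                     \<Rightarrow> ('m \<Rightarrow> ('m bword \<Rightarrow>\<^sub>0 int) set \<Rightarrow> 'a) set monoid" where
  "H_M1 A act n = cohomology (HomB A act) (\<lambda>k. HomB_diff A k) n"

text \<open>C^n: functions on n-tuples (lists of length n) with f(xs) in A(x_1...x_n), vanishing when some
x_i = e (undefined off length n). For n = 0 this is A(e).\<close>
definition Ccoch :: "('m::comm_monoid_mult \<Rightarrow> 'a monoid) \<Rightarrow> nat \<Rightarrow> ('m list \<Rightarrow> 'a) monoid" where
  "Ccoch A n =
     \<lparr>carrier = {f. (\<forall>xs. length xs = n \<longrightarrow>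
                        f xs \<in> carrier (A (prod_list xs)) \<and> (1 \<in> set xs \<longrightarrow> f xs = \<one>\<^bsub>A (prod_list xs)\<^esub>)) \<and>
                   (\<forall>xs. length xs \<noteq> n \<longrightarrow> f xs = undefined)},
      monoid.mult = (\<lambda>f g xs. if length xs = n then f xs \<otimes>\<^bsub>A (prod_list xs)\<^esub> g xs else undefined),
      one = (\<lambda>xs. if length xs = n then \<one>\<^bsub>A (prod_list xs)\<^esub> else undefined)\<rparr>"

definition Cdiff :: "('m::comm_monoid_mult \<Rightarrow> 'a monoid) \<Rightarrow> ('m \<Rightarrow> 'm \<Rightarrow> 'a \<Rightarrow> 'a) \<Rightarrow> nat
                       \<Rightarrow> ('m list \<Rightarrow> 'a) \<Rightarrow> ('m list \<Rightarrow> 'a)" where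
  "Cdiff A act n f =
     (if n = 0 then \<one>\<^bsub>Ccoch A 1\<^esub>
      else (\<lambda>xs. if length xs = Suc n then
              act (prod_list (tl xs)) (hd xs) (f (tl xs))
              \<otimes>\<^bsub>A (prod_list xs)\<^esub>
              (\<Otimes>\<^bsub>A (prod_list xs)\<^esub> i\<in>{1..n}.
                  f (take (i - 1) xs @ [xs!(i-1) * xs!i] @ drop (Suc i) xs) [^]\<^bsub>A (prod_list xs)\<^esub> ((-1::int) ^ i))
              \<otimes>\<^bsub>A (prod_list xs)\<^esub>
              (act (prod_list (butlast xs)) (last xs) (f (butlast xs)) [^]\<^bsub>A (prod_list xs)\<^esub> ((-1::int) ^ Suc n))
            else undefined))"

definition C_M1 :: "('m::comm_monoid_mult \<Rightarrow> 'a monoid) \<Rightarrow> ('m \<Rightarrow> 'm \<Rightarrow> 'a \<Rightarrow> 'a) \<Rightarrow> nat \<Rightarrow> ('m list \<Rightarrow> 'a) set monoid" where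
  "C_M1 A act n = cohomology (Ccoch A) (Cdiff A act) n"

end

theory Submission
  imports Defs
begin

text \<open>
  Since ZM(z) is free on the pairs (u, v) with uv = z and a word is multilinear in its letters
  modulo the defining relations of B(ZM), every word of B(ZM)_n(x) can be expanded, moving all
  actions u_* into the first letter, into a combination of the words
  u_*[(e,v_1)|...|(e,v_n)]; those with some v_i = e are degenerate and vanish.  The remaining
  ones, indexed by the "normal keys" (u, [v_1, ..., v_n]) with uv_1...v_n = x, form a basis:
  the expansion is a well-defined normal form on the free group of words that kills exactly the
  relations.  Consequently an HM-homomorphism B(ZM)_n \<rightarrow> A is the same as its restriction
  f(v_1, ..., v_n) to the words [(e,v_1)|...|(e,v_n)], which is an arbitrary normalised cochain,
  and on these words the bar differential becomes the coboundary of C(M,1;A).  Restriction is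
  therefore an isomorphism of cochain complexes, which induces isomorphisms in cohomology.
\<close>

section \<open>Free abelian groups of fragments\<close>

lemma frag_extend_extend:
  "frag_extend f (frag_extend g a) = frag_extend (\<lambda>p. frag_extend f (g p)) a"
  by (induction a rule: frag_induction[OF subset_UNIV]) (auto simp: frag_extend_diff)

lemma frag_extend_add_fun:
  "frag_extend (\<lambda>p. f p + g p) a = frag_extend f a + frag_extend g a"
  by (induction a rule: frag_induction[OF subset_UNIV]) (auto simp: frag_extend_diff)

lemma frag_extend_diff_fun:
  "frag_extend (\<lambda>p. f p - g p) a = frag_extend f a - frag_extend g a"
  by (induction a rule: frag_induction[OF subset_UNIV]) (auto simp: frag_extend_diff)

lemma frag_cmul_diff_right: "frag_cmul c (x - y) = frag_cmul c x - frag_cmul c y"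
  by (simp add: poly_mapping_eqI lookup_minus right_diff_distrib)

lemma frag_extend_cmul_fun:
  "frag_extend (\<lambda>p. frag_cmul c (f p)) a = frag_cmul c (frag_extend f a)"
  by (induction a rule: frag_induction[OF subset_UNIV]) (auto simp: frag_extend_diff frag_cmul_diff_right)

lemma frag_extend_zero_fun [simp]: "frag_extend (\<lambda>p. 0) a = 0"
  by (simp add: frag_extend_eq_0)

lemma frag_extend_sum_fun:
  "finite I \<Longrightarrow> frag_extend (\<lambda>p. \<Sum>i\<in>I. f i p) a = (\<Sum>i\<in>I. frag_extend (f i) a)"
  by (induction I rule: finite_induct) (auto simp: frag_extend_add_fun)

lemma frag_extend_swap:
  "frag_extend (\<lambda>p. frag_extend (G p) Y) a = frag_extend (\<lambda>k. frag_extend (\<lambda>p. G p k) a) Y"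
  by (induction a rule: frag_induction[OF subset_UNIV]) (simp_all add: frag_extend_diff frag_extend_diff_fun)

lemma frag_cmul_sum_left:
  "frag_cmul (\<Sum>i\<in>I. c i) Y = (\<Sum>i\<in>I. frag_cmul (c i) Y)"
  by (induction I rule: infinite_finite_induct) (auto simp: frag_cmul_distrib)

lemma frag_cmul_add_uminus: "frag_cmul c Q + frag_cmul (- c) Q = 0"
  by (simp add: frag_cmul_distrib[symmetric])

lemma keys_frag_extend_sub:
  "(\<And>p. p \<in> Poly_Mapping.keys a \<Longrightarrow> Poly_Mapping.keys (f p) \<subseteq> S) \<Longrightarrow> Poly_Mapping.keys (frag_extend f a) \<subseteq> S"
  using keys_frag_extend by fastforce

lemma keys_diff_subset:
  "Poly_Mapping.keys a \<subseteq> S \<Longrightarrow> Poly_Mapping.keys b \<subseteq> S \<Longrightarrow> Poly_Mapping.keys (a - b) \<subseteq> S"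
  using keys_diff[of a b] by blast

lemma free_Abelian_group_hom_eq:
  assumes G: "group G" and h1: "h1 \<in> hom (free_Abelian_group S) G" and h2: "h2 \<in> hom (free_Abelian_group S) G"
    and on_generators: "\<And>k. k \<in> S \<Longrightarrow> h1 (frag_of k) = h2 (frag_of k)"
    and Q: "Poly_Mapping.keys Q \<subseteq> S"
  shows "h1 Q = h2 Q"
proof -
  interpret h1: group_hom "free_Abelian_group S" G h1
    using G h1 by (simp add: group_hom_def group_hom_axioms_def)
  interpret h2: group_hom "free_Abelian_group S" G h2
    using G h2 by (simp add: group_hom_def group_hom_axioms_def)
  show ?thesis
  proof (rule free_Abelian_group_induct[where P="\<lambda>Q. h1 Q = h2 Q", OF Q])
    show "h1 0 = h2 0" using h1.hom_one h2.hom_one by simp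
  next
    fix a b assume ab: "Poly_Mapping.keys a \<subseteq> S" "Poly_Mapping.keys b \<subseteq> S" "h1 a = h2 a" "h1 b = h2 b"
    let ?F = "free_Abelian_group S"
    have ab': "a \<in> carrier ?F" "b \<in> carrier ?F" "inv\<^bsub>?F\<^esub> b \<in> carrier ?F" using ab by auto
    have "a - b = a \<otimes>\<^bsub>?F\<^esub> inv\<^bsub>?F\<^esub> b" using ab by simp
    then show "h1 (a - b) = h2 (a - b)"
      using ab by (simp only: h1.hom_mult[OF ab'(1,3)] h2.hom_mult[OF ab'(1,3)] h1.hom_inv[OF ab'(2)] h2.hom_inv[OF ab'(2)])
  qed (rule on_generators)
qed

lemma hom_zero_free_Abelian_group: "group H \<Longrightarrow> h \<in> hom (free_Abelian_group S) H \<Longrightarrow> h 0 = \<one>\<^bsub>H\<^esub>"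
  using group_hom.hom_one[of "free_Abelian_group S" H h] by (simp add: group_hom_def group_hom_axioms_def)

lemma carrier_ZM: "a \<in> carrier (ZM z) \<longleftrightarrow> Poly_Mapping.keys a \<subseteq> {(u, v). u * v = z}"
  by (simp add: ZM_def)

lemma ZM_act_of [simp]: "ZM_act y (frag_of (u, v)) = frag_of (y * u, v)"
  by (simp add: ZM_act_def)

lemma ZM_act_alt: "ZM_act y a = frag_extend (\<lambda>p. frag_of (y * fst p, snd p)) a"
  unfolding ZM_act_def by (simp add: split_def)

lemma ZM_act_carrier: "a \<in> carrier (ZM z) \<Longrightarrow> ZM_act y a \<in> carrier (ZM (y * z))"
  unfolding carrier_ZM ZM_act_alt by (intro keys_frag_extend_sub) (auto simp: mult.assoc)

lemma ZM_act_one: "ZM_act 1 a = a"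
  unfolding ZM_act_alt by (simp add: frag_expansion[symmetric])

lemma ZM_mult_carrier:
  assumes "a \<in> carrier (ZM z)" "b \<in> carrier (ZM z')" shows "ZM_mult a b \<in> carrier (ZM (z * z'))"
  unfolding carrier_ZM ZM_mult_def
proof (intro keys_frag_extend_sub)
  fix p q assume pq: "p \<in> Poly_Mapping.keys a" "q \<in> Poly_Mapping.keys b"
  obtain u v u' v' where pq': "p = (u, v)" "q = (u', v')" by fastforce
  have "u * v = z" "u' * v' = z'" using assms pq pq' by (auto simp: carrier_ZM)
  then show "Poly_Mapping.keys (frag_of (fst p * fst q, snd p * snd q)) \<subseteq> {(u, v). u * v = z * z'}"
    using pq' by (auto simp: mult_ac)
qed

lemma ZM_add_carrier: "a \<in> carrier (ZM z) \<Longrightarrow> b \<in> carrier (ZM z) \<Longrightarrow> a + b \<in> carrier (ZM z)"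
  using keys_add[of a b] unfolding carrier_ZM by blast

lemma ZM_mult_of [simp]: "ZM_mult (frag_of (u, v)) (frag_of (u', v')) = frag_of (u * u', v * v')"
  by (simp add: ZM_mult_def)

lemma ZM_eps_of [simp]: "ZM_eps (frag_of p) = 1"
  by (simp add: ZM_eps_def)

lemma frag_extend_const_ZM_eps:
  assumes "\<And>p. p \<in> Poly_Mapping.keys a \<Longrightarrow> f p = Y"
  shows "frag_extend f a = frag_cmul (ZM_eps a) Y"
  using assms by (simp add: frag_extend_def ZM_eps_def frag_cmul_sum_left)

section \<open>Normal forms of words\<close>

text \<open>
  A key (u, [v_1, ..., v_n]) stands for the word u_*[(e,v_1)|(e,v_2)|...|(e,v_n)] of B(ZM)_n.
  Modulo the relations, the word [(u_1,v_1)|...|(u_n,v_n)] equals the key (u_1...u_n, [v_1, ..., v_n]),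
  and expand_letters extends this multilinearly to arbitrary letters in ZM.
\<close>

definition prepend_letter :: "(('m::comm_monoid_mult \<times> 'm) \<Rightarrow>\<^sub>0 int) \<Rightarrow> (('m \<times> 'm list) \<Rightarrow>\<^sub>0 int) \<Rightarrow> (('m \<times> 'm list) \<Rightarrow>\<^sub>0 int)" where
  "prepend_letter a Q = frag_extend (\<lambda>p. frag_extend (\<lambda>k. frag_of (fst p * fst k, snd p # snd k)) Q) a"

fun expand_letters :: "(('m::comm_monoid_mult \<times> 'm) \<Rightarrow>\<^sub>0 int) list \<Rightarrow> (('m \<times> 'm list) \<Rightarrow>\<^sub>0 int)" where
  "expand_letters [] = frag_of (1, [])"
| "expand_letters (a # as) = prepend_letter a (expand_letters as)"

definition drop_degenerate :: "(('m::comm_monoid_mult \<times> 'm list) \<Rightarrow>\<^sub>0 int) \<Rightarrow> (('m \<times> 'm list) \<Rightarrow>\<^sub>0 int)" where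
  "drop_degenerate Q = frag_extend (\<lambda>k. if 1 \<in> set (snd k) then 0 else frag_of k) Q"

definition shift_keys :: "'m::comm_monoid_mult \<Rightarrow> (('m \<times> 'm list) \<Rightarrow>\<^sub>0 int) \<Rightarrow> (('m \<times> 'm list) \<Rightarrow>\<^sub>0 int)" where
  "shift_keys y Q = frag_extend (\<lambda>k. frag_of (y * fst k, snd k)) Q"

lemma prepend_letter_add_left: "prepend_letter (a + b) Q = prepend_letter a Q + prepend_letter b Q"
  by (simp add: prepend_letter_def frag_extend_add)

lemma prepend_letter_add_right: "prepend_letter a (Q + Y) = prepend_letter a Q + prepend_letter a Y"
  by (simp add: prepend_letter_def frag_extend_add frag_extend_add_fun)

lemma prepend_letter_of: "prepend_letter (frag_of p) (frag_of k) = frag_of (fst p * fst k, snd p # snd k)"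
  by (simp add: prepend_letter_def)

lemma prepend_letter_ZM_act: "prepend_letter (ZM_act u a) Q = shift_keys u (prepend_letter a Q)"
  unfolding prepend_letter_def ZM_act_alt shift_keys_def frag_extend_extend
  by (simp add: mult.assoc)

lemma prepend_letter_shift_keys: "prepend_letter a (shift_keys u Q) = shift_keys u (prepend_letter a Q)"
  unfolding prepend_letter_def shift_keys_def frag_extend_extend
  by (simp add: mult_ac)

lemma drop_degenerate_add: "drop_degenerate (Q + Y) = drop_degenerate Q + drop_degenerate Y"
  by (simp add: drop_degenerate_def frag_extend_add)

lemma drop_degenerate_prepend_letter: "drop_degenerate (prepend_letter a Q) = drop_degenerate (prepend_letter a (drop_degenerate Q))"
  unfolding prepend_letter_def drop_degenerate_def frag_extend_extend
  by (intro frag_extend_eq) (simp add: frag_extend_extend if_distrib[of "frag_extend _"] cong: if_cong)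

lemma drop_degenerate_prepend_unit: "drop_degenerate (prepend_letter (frag_of (z, 1)) Q) = 0"
  unfolding prepend_letter_def drop_degenerate_def frag_extend_extend by simp

lemma drop_degenerate_shift_keys: "drop_degenerate (shift_keys y Q) = shift_keys y (drop_degenerate Q)"
  unfolding shift_keys_def drop_degenerate_def frag_extend_extend
  by (intro frag_extend_eq) (auto simp: frag_extend_extend)

lemma expand_letters_update_add:
  "i < length as \<Longrightarrow> expand_letters (as[i := a + b]) = expand_letters (as[i := a]) + expand_letters (as[i := b])"
proof (induction as arbitrary: i)
  case Nil then show ?case by simp
next
  case (Cons c as)
  then show ?case by (cases i) (auto simp: prepend_letter_add_left prepend_letter_add_right)
qed

lemma expand_letters_update_act:
  "i < length as \<Longrightarrow> expand_letters (as[i := ZM_act u (as!i)]) = shift_keys u (expand_letters as)"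
proof (induction as arbitrary: i)
  case Nil then show ?case by simp
next
  case (Cons c as)
  then show ?case by (cases i) (auto simp: prepend_letter_ZM_act prepend_letter_shift_keys)
qed

lemma drop_degenerate_expand_letters_unit:
  "i < length as \<Longrightarrow> as!i = frag_of (z, 1) \<Longrightarrow> drop_degenerate (expand_letters as) = 0"
proof (induction as arbitrary: i)
  case Nil then show ?case by simp
next
  case (Cons c as)
  then show ?case
  proof (cases i)
    case 0 then show ?thesis using Cons by (simp add: drop_degenerate_prepend_unit)
  next
    case (Suc j) then show ?thesis using Cons by (simp, subst drop_degenerate_prepend_letter, simp add: prepend_letter_def drop_degenerate_def)
  qed
qed

definition std_word :: "'m::comm_monoid_mult list \<Rightarrow> 'm bword" where
  "std_word vs = map (\<lambda>v. (v, frag_of (1, v))) vs"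

definition normal_word :: "'m::comm_monoid_mult \<Rightarrow> 'm bword \<Rightarrow> (('m \<times> 'm list) \<Rightarrow>\<^sub>0 int)" where
  "normal_word x w = (if w = [] then frag_of (x, []) else drop_degenerate (expand_letters (map snd w)))"

definition normal_form :: "'m::comm_monoid_mult \<Rightarrow> ('m bword \<Rightarrow>\<^sub>0 int) \<Rightarrow> (('m \<times> 'm list) \<Rightarrow>\<^sub>0 int)" where
  "normal_form x r = frag_extend (normal_word x) r"

definition key_word :: "('m::comm_monoid_mult \<times> 'm list) \<Rightarrow> ('m bword \<Rightarrow>\<^sub>0 int)" where
  "key_word k = frag_of (act_word (fst k) (std_word (snd k)))"

definition key_chain :: "(('m::comm_monoid_mult \<times> 'm list) \<Rightarrow>\<^sub>0 int) \<Rightarrow> ('m bword \<Rightarrow>\<^sub>0 int)" where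
  "key_chain Q = frag_extend key_word Q"

definition normal_keys :: "nat \<Rightarrow> 'm::comm_monoid_mult \<Rightarrow> ('m \<times> 'm list) set" where
  "normal_keys n x = {k. length (snd k) = n \<and> 1 \<notin> set (snd k) \<and> fst k * prod_list (snd k) = x}"

lemma keys_prepend_letter:
  assumes "Poly_Mapping.keys a \<subseteq> A" "Poly_Mapping.keys Q \<subseteq> B"
  shows "Poly_Mapping.keys (prepend_letter a Q) \<subseteq> (\<lambda>(p, k). (fst p * fst k, snd p # snd k)) ` (A \<times> B)"
  unfolding prepend_letter_def
proof (intro keys_frag_extend_sub)
  fix p k assume "p \<in> Poly_Mapping.keys a" "k \<in> Poly_Mapping.keys Q"
  then have "(p, k) \<in> A \<times> B" using assms by blast
  then show "Poly_Mapping.keys (frag_of (fst p * fst k, snd p # snd k)) \<subseteq> (\<lambda>(p, k). (fst p * fst k, snd p # snd k)) ` (A \<times> B)"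
    by force
qed

lemma keys_drop_degenerate: "Poly_Mapping.keys (drop_degenerate Q) \<subseteq> {k \<in> Poly_Mapping.keys Q. 1 \<notin> set (snd k)}"
  unfolding drop_degenerate_def by (intro keys_frag_extend_sub) auto

lemma keys_shift_keys: "Poly_Mapping.keys (shift_keys y Q) \<subseteq> (\<lambda>k. (y * fst k, snd k)) ` Poly_Mapping.keys Q"
  unfolding shift_keys_def by (intro keys_frag_extend_sub) auto

lemma keys_expand_letters:
  assumes "\<forall>(z, a) \<in> set w. a \<in> carrier (ZM z)"
  shows "Poly_Mapping.keys (expand_letters (map snd w)) \<subseteq>
           {k. length (snd k) = length w \<and> fst k * prod_list (snd k) = prod_list (map fst w)}"
  using assms
proof (induction w)
  case Nil then show ?case by simp
next
  case (Cons c w)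
  obtain z a where c: "c = (z, a)" by fastforce
  have a: "Poly_Mapping.keys a \<subseteq> {p. fst p * snd p = z}"
    using Cons.prems c by (auto simp: carrier_ZM)
  have IH: "Poly_Mapping.keys (expand_letters (map snd w)) \<subseteq>
           {k. length (snd k) = length w \<and> fst k * prod_list (snd k) = prod_list (map fst w)}"
    using Cons by auto
  show ?case
    using keys_prepend_letter[OF a IH] c by (auto simp: mult_ac)
qed

lemma expand_letters_std_word: "expand_letters (map snd (std_word vs)) = frag_of (1, vs)"
  by (induction vs) (auto simp: std_word_def prepend_letter_of)

lemma expand_letters_act_word: "w \<noteq> [] \<Longrightarrow> expand_letters (map snd (act_word y w)) = shift_keys y (expand_letters (map snd w))"
  by (cases w) (auto simp: act_word_def prepend_letter_ZM_act)

lemma normal_word_act_word: "normal_word (x * y) (act_word y w) = shift_keys y (normal_word x w)"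
proof (cases w)
  case Nil then show ?thesis by (simp add: normal_word_def act_word_def shift_keys_def mult.commute[of x y])
next
  case (Cons c w') then show ?thesis by (simp add: normal_word_def act_word_def prepend_letter_ZM_act drop_degenerate_shift_keys)
qed

lemma bwords_Cons:
  "(c # w) \<in> bwords (Suc n) x \<longleftrightarrow>
     snd c \<in> carrier (ZM (fst c)) \<and> w \<in> bwords n (prod_list (map fst w)) \<and> x = fst c * prod_list (map fst w)"
  by (cases c) (auto simp: bwords_def)

lemma keys_normal_word:
  assumes "w \<in> bwords n x" shows "Poly_Mapping.keys (normal_word x w) \<subseteq> normal_keys n x"
proof (cases "w = []")
  case True then show ?thesis using assms by (auto simp: normal_word_def normal_keys_def bwords_def)
next
  case False
  have w: "\<forall>(z, a) \<in> set w. a \<in> carrier (ZM z)" "length w = n" "prod_list (map fst w) = x"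
    using assms False by (auto simp: bwords_def)
  show ?thesis using False keys_drop_degenerate[of "expand_letters (map snd w)"] keys_expand_letters[OF w(1)] w(2,3)
    by (auto simp: normal_word_def normal_keys_def)
qed

lemma keys_normal_form:
  assumes "r \<in> carrier (bfree n x)" shows "Poly_Mapping.keys (normal_form x r) \<subseteq> normal_keys n x"
  using assms unfolding normal_form_def bfree_def by (auto intro!: keys_frag_extend_sub keys_normal_word)

lemma std_word_Cons: "std_word (v # vs) = (v, frag_of (1, v)) # std_word vs"
  by (simp add: std_word_def)

lemma std_word_Nil [simp]: "std_word [] = []"
  by (simp add: std_word_def)

lemma std_word_eq_Nil [simp]: "std_word vs = [] \<longleftrightarrow> vs = []"
  by (simp add: std_word_def)

lemma length_std_word [simp]: "length (std_word vs) = length vs"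
  by (simp add: std_word_def)

lemma prod_std_word [simp]: "prod_list (map fst (std_word vs)) = prod_list vs"
  by (induction vs) (auto simp: std_word_def)

lemma act_word_std_word_Cons: "act_word U (std_word (v # vs)) = (U * v, frag_of (U, v)) # std_word vs"
  by (simp add: std_word_def act_word_def)

lemma std_word_carrier: "\<forall>(z, a) \<in> set (std_word vs). a \<in> carrier (ZM z)"
  by (auto simp: std_word_def carrier_ZM)

lemma act_word_std_word_bwords:
  assumes "k \<in> normal_keys n x" shows "act_word (fst k) (std_word (snd k)) \<in> bwords n x"
proof -
  obtain U vs where k: "k = (U, vs)" by fastforce
  show ?thesis
  proof (cases vs)
    case Nil then show ?thesis using assms k by (simp add: normal_keys_def bwords_def act_word_def)
  next
    case (Cons v vs')
    then show ?thesis using assms k std_word_carrier[of vs']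
      by (auto simp: normal_keys_def bwords_def act_word_std_word_Cons carrier_ZM mult_ac)
  qed
qed

lemma key_chain_carrier:
  assumes "Poly_Mapping.keys Q \<subseteq> normal_keys n x" shows "key_chain Q \<in> carrier (bfree n x)"
  unfolding key_chain_def bfree_def key_word_def carrier_free_Abelian_group_iff
proof (rule keys_frag_extend_sub)
  fix k assume "k \<in> Poly_Mapping.keys Q"
  then have "k \<in> normal_keys n x" using assms by blast
  then show "Poly_Mapping.keys (frag_of (act_word (fst k) (std_word (snd k)))) \<subseteq> bwords n x"
    using act_word_std_word_bwords by simp
qed

lemma normal_form_key_word:
  assumes "k \<in> normal_keys n x" shows "normal_form x (key_word k) = frag_of k"
proof -
  obtain U vs where k: "k = (U, vs)" by fastforce
  show ?thesis
  proof (cases "vs = []")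
    case True then show ?thesis using assms k by (simp add: key_word_def normal_word_def normal_keys_def act_word_def normal_form_def)
  next
    case False
    then have "std_word vs \<noteq> []" by simp
    then have "normal_word x (act_word U (std_word vs)) = drop_degenerate (shift_keys U (frag_of (1, vs)))"
      using False by (simp add: normal_word_def act_word_def expand_letters_act_word[symmetric] expand_letters_std_word[symmetric] del: expand_letters.simps)
    then show ?thesis using assms k
      by (simp add: key_word_def normal_keys_def shift_keys_def drop_degenerate_def normal_form_def)
  qed
qed

lemma normal_form_key_chain:
  assumes "Poly_Mapping.keys Q \<subseteq> normal_keys n x" shows "normal_form x (key_chain Q) = Q"
proof -
  have "normal_form x (key_chain Q) = frag_extend (\<lambda>k. normal_form x (key_word k)) Q"
    by (simp add: normal_form_def key_chain_def frag_extend_extend)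
  also have "\<dots> = frag_extend frag_of Q"
  proof (intro frag_extend_eq)
    fix k assume "k \<in> Poly_Mapping.keys Q"
    then have "k \<in> normal_keys n x" using assms by blast
    then show "normal_form x (key_word k) = frag_of k" by (rule normal_form_key_word)
  qed
  finally show ?thesis by (simp add: frag_expansion[symmetric])
qed

lemma normal_form_add: "normal_form x (r + s) = normal_form x r + normal_form x s"
  by (simp add: normal_form_def frag_extend_add)

lemma normal_form_diff: "normal_form x (r - s) = normal_form x r - normal_form x s"
  by (simp add: normal_form_def frag_extend_diff)

lemma normal_form_0 [simp]: "normal_form x 0 = 0"
  by (simp add: normal_form_def)

lemma normal_form_of [simp]: "normal_form x (frag_of w) = normal_word x w"
  by (simp add: normal_form_def)

lemma map_fst_update_same: "i < length w \<Longrightarrow> map fst (w[i := (fst (w!i), c)]) = map fst w"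
proof -
  assume i: "i < length w"
  have "map fst (w[i := (fst (w!i), c)]) = (map fst w)[i := (map fst w)!i]"
    using i by (simp add: map_update)
  then show ?thesis by simp
qed

lemma prod_list_update_mult:
  "i < length xs \<Longrightarrow> prod_list (xs[i := u * xs!i]) = u * (prod_list (xs::'m::comm_monoid_mult list))"
  by (induction xs arbitrary: i) (auto simp: mult_ac split: nat.splits)

lemma letters_in_ZM_update:
  assumes "\<forall>(z, a) \<in> set w. a \<in> carrier (ZM z)" "c \<in> carrier (ZM z')"
  shows "\<forall>(z, a) \<in> set (w[i := (z', c)]). a \<in> carrier (ZM z)"
  using assms set_update_subset_insert[of w i "(z', c)"] by auto

lemma bwords_update_letter:
  assumes "w \<in> bwords n x" "i < n" "c \<in> carrier (ZM (fst (w!i)))"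
  shows "w[i := (fst (w!i), c)] \<in> bwords n x"
  using assms letters_in_ZM_update[of w c "fst (w!i)" i] map_fst_update_same[of i w]
  by (auto simp: bwords_def)

lemma bwords_update_act:
  assumes "length w = n" "\<forall>(z, a) \<in> set w. a \<in> carrier (ZM z)" "i < n" "u * prod_list (map fst w) = x"
  shows "w[i := (u * fst (w!i), ZM_act u (snd (w!i)))] \<in> bwords n x"
proof -
  have wi: "w!i \<in> set w" using assms by auto
  then have "snd (w!i) \<in> carrier (ZM (fst (w!i)))" using assms(2) by auto
  then have c: "ZM_act u (snd (w!i)) \<in> carrier (ZM (u * fst (w!i)))" by (rule ZM_act_carrier)
  have "map fst (w[i := (u * fst (w!i), ZM_act u (snd (w!i)))]) = (map fst w)[i := u * (map fst w)!i]"
    using assms by (simp add: map_update)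
  then have "prod_list (map fst (w[i := (u * fst (w!i), ZM_act u (snd (w!i)))])) = x"
    using assms prod_list_update_mult[of i "map fst w" u] by simp
  then show ?thesis using assms letters_in_ZM_update[OF assms(2) c] by (auto simp: bwords_def)
qed

lemma brels_carrier: "brels n x \<subseteq> carrier (bfree n x)"
proof
  fix h assume h: "h \<in> brels n x"
  let ?S = "bwords n x"
  have fo: "Poly_Mapping.keys (frag_of w) \<subseteq> ?S" if "w \<in> ?S" for w using that by simp
  have "Poly_Mapping.keys h \<subseteq> ?S"
    using h
  proof (simp only: brels_def Un_iff, elim disjE exE conjE CollectE)
    fix w i a b
    assume eq: "h = frag_of (w[i := (fst (w!i), a + b)]) - frag_of (w[i := (fst (w!i), a)]) - frag_of (w[i := (fst (w!i), b)])"
      and w: "w \<in> bwords n x" "i < n" "a \<in> carrier (ZM (fst (w!i)))" "b \<in> carrier (ZM (fst (w!i)))"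
    have "a + b \<in> carrier (ZM (fst (w!i)))" using w ZM_add_carrier by blast
    then have "w[i := (fst (w!i), a + b)] \<in> ?S" "w[i := (fst (w!i), a)] \<in> ?S" "w[i := (fst (w!i), b)] \<in> ?S"
      using w bwords_update_letter[of w n x i] by auto
    then show ?thesis unfolding eq by (intro keys_diff_subset fo)
  next
    fix w i u
    assume eq: "h = frag_of (w[i := (u * fst (w!i), ZM_act u (snd (w!i)))]) - frag_of (w[Suc i := (u * fst (w!Suc i), ZM_act u (snd (w!Suc i)))])"
      and w: "length w = n" "\<forall>(z, a) \<in> set w. a \<in> carrier (ZM z)" "Suc i < n" "u * prod_list (map fst w) = x"
    have "w[i := (u * fst (w!i), ZM_act u (snd (w!i)))] \<in> ?S"
         "w[Suc i := (u * fst (w!Suc i), ZM_act u (snd (w!Suc i)))] \<in> ?S"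
      using w by (auto intro!: bwords_update_act)
    then show ?thesis unfolding eq by (intro keys_diff_subset fo)
  next
    fix w assume "h = frag_of w" "w \<in> bwords n x"
    then show ?thesis by simp
  qed
  then show "h \<in> carrier (bfree n x)" by (simp add: bfree_def)
qed

lemma brels_additive:
  "w \<in> bwords n x \<Longrightarrow> i < n \<Longrightarrow> a \<in> carrier (ZM (fst (w!i))) \<Longrightarrow> b \<in> carrier (ZM (fst (w!i))) \<Longrightarrow>
    frag_of (w[i := (fst (w!i), a + b)]) - frag_of (w[i := (fst (w!i), a)]) - frag_of (w[i := (fst (w!i), b)]) \<in> brels n x"
  unfolding brels_def by blast

lemma brels_move_act:
  "length w = n \<Longrightarrow> \<forall>(z, a) \<in> set w. a \<in> carrier (ZM z) \<Longrightarrow> Suc i < n \<Longrightarrow> u * prod_list (map fst w) = x \<Longrightarrow>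
    frag_of (w[i := (u * fst (w!i), ZM_act u (snd (w!i)))])
      - frag_of (w[Suc i := (u * fst (w!Suc i), ZM_act u (snd (w!Suc i)))]) \<in> brels n x"
  unfolding brels_def by blast

lemma brels_degenerate:
  "w \<in> bwords n x \<Longrightarrow> i < n \<Longrightarrow> snd (w!i) = frag_of (fst (w!i), 1) \<Longrightarrow> frag_of w \<in> brels n x"
  unfolding brels_def by blast

lemma bfree_group: "group (bfree n x)"
  by (simp add: bfree_def)

lemma bfree_comm_group: "comm_group (bfree n x)"
  by (simp add: bfree_def abelian_free_Abelian_group)

lemma bfree_add: "r \<in> carrier (bfree n x) \<Longrightarrow> s \<in> carrier (bfree n x) \<Longrightarrow> r + s \<in> carrier (bfree n x)"
  using keys_add[of r s] by (auto simp: bfree_def)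

lemma bfree_cmul: "r \<in> carrier (bfree n x) \<Longrightarrow> frag_cmul c r \<in> carrier (bfree n x)"
  using keys_cmul[of c r] by (auto simp: bfree_def)

lemma bfree_sum: "(\<And>i. i \<in> I \<Longrightarrow> f i \<in> carrier (bfree n x)) \<Longrightarrow> sum f I \<in> carrier (bfree n x)"
  unfolding bfree_def by (rule sum_closed_free_Abelian_group)

lemma bfree_of: "w \<in> bwords n x \<Longrightarrow> frag_of w \<in> carrier (bfree n x)"
  by (simp add: bfree_def)

lemma bsub_subgroup: "subgroup (bsub n x) (bfree n x)"
  unfolding bsub_def by (rule group.generate_is_subgroup[OF bfree_group brels_carrier])

lemma bsub_carrier: "h \<in> bsub n x \<Longrightarrow> h \<in> carrier (bfree n x)"
  using subgroup.subset[OF bsub_subgroup] by blast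

lemma bsub_0 [simp]: "0 \<in> bsub n x"
  using subgroup.one_closed[OF bsub_subgroup, of n x] by (simp add: bfree_def)

lemma bsub_add: "a \<in> bsub n x \<Longrightarrow> b \<in> bsub n x \<Longrightarrow> a + b \<in> bsub n x"
  using subgroup.m_closed[OF bsub_subgroup, of a n x b] by (simp add: bfree_def)

lemma bsub_neg: "a \<in> bsub n x \<Longrightarrow> - a \<in> bsub n x"
  using subgroup.m_inv_closed[OF bsub_subgroup, of a n x] bsub_carrier[of a n x]
  by (simp add: bfree_def)

lemma bsub_diff: "a \<in> bsub n x \<Longrightarrow> b \<in> bsub n x \<Longrightarrow> a - b \<in> bsub n x"
  using bsub_add[OF _ bsub_neg] by (metis diff_conv_add_uminus)

lemma bsub_cmul: "a \<in> bsub n x \<Longrightarrow> frag_cmul k a \<in> bsub n x"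
  by (rule frag_closure_minus_cmul[where P="\<lambda>a. a \<in> bsub n x"]) (auto intro: bsub_diff)

lemma bsub_sum: "(\<And>i. i \<in> I \<Longrightarrow> f i \<in> bsub n x) \<Longrightarrow> sum f I \<in> bsub n x"
  by (induction I rule: infinite_finite_induct) (auto intro: bsub_add)

lemma bsub_extend: "(\<And>p. p \<in> Poly_Mapping.keys c \<Longrightarrow> F p \<in> bsub n x) \<Longrightarrow> frag_extend F c \<in> bsub n x"
  unfolding frag_extend_def by (intro bsub_sum bsub_cmul) auto

lemma brels_bsub: "h \<in> brels n x \<Longrightarrow> h \<in> bsub n x"
  unfolding bsub_def by (rule generate.incl)

lemma map_snd_update: "map snd (w[i := (z, c)]) = (map snd w)[i := c]"
  by (simp add: map_update)

lemma normal_word_nonempty: "w \<noteq> [] \<Longrightarrow> normal_word x w = drop_degenerate (expand_letters (map snd w))"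
  by (simp add: normal_word_def)

lemma expand_letters_update_act_word:
  "i < length w \<Longrightarrow> expand_letters ((map snd w)[i := ZM_act u (snd (w!i))]) = shift_keys u (expand_letters (map snd w))"
  using expand_letters_update_act[of i "map snd w" u] by simp

lemma normal_form_brels: "h \<in> brels n x \<Longrightarrow> normal_form x h = 0"
proof (simp only: brels_def Un_iff, elim disjE exE conjE CollectE)
  fix w i a b
  assume eq: "h = frag_of (w[i := (fst (w!i), a + b)]) - frag_of (w[i := (fst (w!i), a)]) - frag_of (w[i := (fst (w!i), b)])"
    and w: "w \<in> bwords n x" "i < n" "a \<in> carrier (ZM (fst (w!i)))" "b \<in> carrier (ZM (fst (w!i)))"
  have len: "length w = n" using w by (simp add: bwords_def)
  then have ne: "w[i := c] \<noteq> []" for c using w by auto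
  show "normal_form x h = 0" unfolding eq normal_form_diff normal_form_of
    using ne len w(2)
    by (simp add: normal_word_nonempty map_snd_update expand_letters_update_add drop_degenerate_add)
next
  fix w i u
  assume eq: "h = frag_of (w[i := (u * fst (w!i), ZM_act u (snd (w!i)))]) - frag_of (w[Suc i := (u * fst (w!Suc i), ZM_act u (snd (w!Suc i)))])"
    and w: "length w = n" "\<forall>(z, a) \<in> set w. a \<in> carrier (ZM z)" "Suc i < n" "u * prod_list (map fst w) = x"
  have ne: "w[j := c] \<noteq> []" for j c using w by auto
  have "snd (w!i) = (map snd w)!i" "snd (w!Suc i) = (map snd w)!Suc i" using w by auto
  then show "normal_form x h = 0" unfolding eq normal_form_diff normal_form_of
    using ne w(1,3)
    by (simp add: normal_word_nonempty map_snd_update expand_letters_update_act_word del: expand_letters.simps)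
next
  fix w i assume eq: "h = frag_of w" and w: "w \<in> bwords n x" and i: "i < n" "snd (w!i) = frag_of (fst (w!i), 1)"
  have len: "length w = n" using w by (simp add: bwords_def)
  have "(map snd w)!i = frag_of (fst (w!i), 1)" using i len by simp
  moreover have "w \<noteq> []" using i len by auto
  ultimately have "normal_word x w = 0" using i len
    by (simp add: normal_word_nonempty drop_degenerate_expand_letters_unit[of i "map snd w" "fst (w!i)"] del: expand_letters.simps)
  then show "normal_form x h = 0" using eq by simp
qed

lemma normal_form_bsub: "h \<in> bsub n x \<Longrightarrow> normal_form x h = 0"
  unfolding bsub_def
proof (induction rule: generate.induct)
  case one then show ?case by (simp add: bfree_def)
next
  case (incl h) then show ?case by (rule normal_form_brels)
next
  case (inv h)
  then have "h \<in> carrier (bfree n x)" using brels_carrier by blast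
  then show ?case using inv normal_form_brels[of h n x] by (simp add: bfree_def normal_form_def frag_extend_minus)
next
  case (eng h1 h2) then show ?case by (simp add: bfree_def normal_form_add)
qed

definition cons_chain :: "('m \<times> (('m \<times> 'm) \<Rightarrow>\<^sub>0 int)) \<Rightarrow> ('m bword \<Rightarrow>\<^sub>0 int) \<Rightarrow> ('m bword \<Rightarrow>\<^sub>0 int)" where
  "cons_chain c r = frag_extend (\<lambda>w. frag_of (c # w)) r"

lemma cons_chain_of [simp]: "cons_chain c (frag_of w) = frag_of (c # w)"
  by (simp add: cons_chain_def)

lemma cons_chain_diff: "cons_chain c (a - b) = cons_chain c a - cons_chain c b"
  by (simp add: cons_chain_def frag_extend_diff)

lemma cons_chain_add: "cons_chain c (a + b) = cons_chain c a + cons_chain c b"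
  by (simp add: cons_chain_def frag_extend_add)

lemma cons_chain_0 [simp]: "cons_chain c 0 = 0" by (simp add: cons_chain_def)

lemma cons_chain_neg: "cons_chain c (- a) = - cons_chain c a"
  by (simp add: cons_chain_def frag_extend_minus)

lemma cons_chain_brels:
  assumes c: "snd c \<in> carrier (ZM (fst c))" and h: "h \<in> brels k y"
  shows "cons_chain c h \<in> brels (Suc k) (fst c * y)"
  using h[unfolded brels_def]
proof (elim UnE exE conjE CollectE)
  fix w i a b
  assume eq: "h = frag_of (w[i := (fst (w!i), a + b)]) - frag_of (w[i := (fst (w!i), a)]) - frag_of (w[i := (fst (w!i), b)])"
    and w: "w \<in> bwords k y" "i < k" "a \<in> carrier (ZM (fst (w!i)))" "b \<in> carrier (ZM (fst (w!i)))"
  have w': "c # w \<in> bwords (Suc k) (fst c * y)" using w c by (auto simp: bwords_def)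
  have eqc: "cons_chain c h = frag_of ((c#w)[Suc i := (fst ((c#w)!Suc i), a + b)]) - frag_of ((c#w)[Suc i := (fst ((c#w)!Suc i), a)])
          - frag_of ((c#w)[Suc i := (fst ((c#w)!Suc i), b)])"
    unfolding eq by (simp add: cons_chain_diff)
  show ?thesis
    using brels_additive[OF w', of "Suc i" a b] eqc w by simp
next
  fix w i u
  assume eq: "h = frag_of (w[i := (u * fst (w!i), ZM_act u (snd (w!i)))]) - frag_of (w[Suc i := (u * fst (w!Suc i), ZM_act u (snd (w!Suc i)))])"
    and w: "length w = k" "\<forall>(z, a) \<in> set w. a \<in> carrier (ZM z)" "Suc i < k" "u * prod_list (map fst w) = y"
  have w': "length (c#w) = Suc k" "\<forall>(z, a) \<in> set (c#w). a \<in> carrier (ZM z)" "Suc (Suc i) < Suc k"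
    "u * prod_list (map fst (c#w)) = fst c * y"
    using w c by (auto simp: mult_ac)
  have eqc: "cons_chain c h = frag_of ((c#w)[Suc i := (u * fst ((c#w)!Suc i), ZM_act u (snd ((c#w)!Suc i)))])
       - frag_of ((c#w)[Suc (Suc i) := (u * fst ((c#w)!Suc (Suc i)), ZM_act u (snd ((c#w)!Suc (Suc i))))])"
    unfolding eq by (simp add: cons_chain_diff)
  show ?thesis
    using brels_move_act[OF w'] eqc by simp
next
  fix w i assume eq: "h = frag_of w" and w: "w \<in> bwords k y" and i: "i < k" "snd (w!i) = frag_of (fst (w!i), 1)"
  have w': "c # w \<in> bwords (Suc k) (fst c * y)" using w c i by (auto simp: bwords_def)
  show ?thesis
    using brels_degenerate[OF w', of "Suc i"] eq i by simp
qed

lemma cons_chain_bsub: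
  assumes c: "snd c \<in> carrier (ZM (fst c))" and h: "h \<in> bsub k y"
  shows "cons_chain c h \<in> bsub (Suc k) (fst c * y)"
  using h unfolding bsub_def
proof (induction rule: generate.induct)
  case one then show ?case using bsub_0 by (simp add: bfree_def bsub_def)
next
  case (incl h) show ?case by (rule generate.incl[OF cons_chain_brels[OF c incl]])
next
  case (inv h)
  then have "h \<in> carrier (bfree k y)" using brels_carrier by blast
  then have "inv\<^bsub>bfree k y\<^esub> h = - h" by (simp add: bfree_def)
  have "cons_chain c h \<in> bsub (Suc k) (fst c * y)" using cons_chain_brels[OF c inv] by (rule brels_bsub)
  then have "- cons_chain c h \<in> bsub (Suc k) (fst c * y)" by (rule bsub_neg)
  then show ?case using \<open>inv\<^bsub>bfree k y\<^esub> h = - h\<close> by (simp add: bsub_def cons_chain_neg)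
next
  case (eng h1 h2) then show ?case using bsub_add by (simp add: bfree_def bsub_def cons_chain_add)
qed

section \<open>Every word is congruent to its normal form\<close>

lemma bsub_additive_first:
  assumes "a \<in> carrier (ZM Z)" "b \<in> carrier (ZM Z)" "(Z, a) # rest \<in> bwords n x"
  shows "frag_of ((Z, a + b) # rest) - frag_of ((Z, a) # rest) - frag_of ((Z, b) # rest) \<in> bsub n x"
proof -
  have "0 < n" using assms(3) by (auto simp: bwords_def)
  then show ?thesis
    using brels_bsub[OF brels_additive[OF assms(3), of 0 a b]] assms by simp
qed

lemma bsub_expand_first:
  assumes W: "\<And>c. c \<in> carrier (ZM Z) \<Longrightarrow> (Z, c) # rest \<in> bwords n x"
    and b: "b \<in> carrier (ZM Z)"
  shows "frag_of ((Z, b) # rest) - frag_extend (\<lambda>p. frag_of ((Z, frag_of p) # rest)) b \<in> bsub n x"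
proof -
  let ?S = "{(u, v). u * v = Z}"
  have cZ: "c \<in> carrier (ZM Z) \<longleftrightarrow> Poly_Mapping.keys c \<subseteq> ?S" for c by (simp add: carrier_ZM)
  have kb: "Poly_Mapping.keys b \<subseteq> ?S" using b cZ by blast
  let ?P = "\<lambda>b. frag_of ((Z, b) # rest) - frag_extend (\<lambda>p. frag_of ((Z, frag_of p) # rest)) b \<in> bsub n x"
  show ?thesis
  proof (rule free_Abelian_group_induct[where P="?P", OF kb])
    have z: "(0::('a \<times> 'a) \<Rightarrow>\<^sub>0 int) \<in> carrier (ZM Z)" by (simp add: cZ)
    have "frag_of ((Z, 0 + 0) # rest) - frag_of ((Z, 0) # rest) - frag_of ((Z, 0) # rest) \<in> bsub n x"
      by (rule bsub_additive_first[OF z z W[OF z]])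
    then have "- frag_of ((Z, 0) # rest) \<in> bsub n x" by simp
    then have "frag_of ((Z, 0) # rest) \<in> bsub n x" using bsub_neg by fastforce
    then show "?P 0" by simp
  next
    fix x1 y1 assume k1: "Poly_Mapping.keys x1 \<subseteq> ?S" and k2: "Poly_Mapping.keys y1 \<subseteq> ?S"
      and P1: "?P x1" and P2: "?P y1"
    have cx: "x1 \<in> carrier (ZM Z)" "y1 \<in> carrier (ZM Z)" using k1 k2 cZ by auto
    have cxy: "x1 - y1 \<in> carrier (ZM Z)" using k1 k2 keys_diff[of x1 y1] cZ by blast
    have r: "frag_of ((Z, (x1 - y1) + y1) # rest) - frag_of ((Z, x1 - y1) # rest) - frag_of ((Z, y1) # rest) \<in> bsub n x"
      by (rule bsub_additive_first[OF cxy cx(2) W[OF cxy]])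
    let ?F = "frag_extend (\<lambda>p. frag_of ((Z, frag_of p) # rest))"
    have "frag_of ((Z, x1 - y1) # rest) - ?F (x1 - y1)
        = (frag_of ((Z, x1) # rest) - ?F x1) - (frag_of ((Z, y1) # rest) - ?F y1)
          - (frag_of ((Z, (x1 - y1) + y1) # rest) - frag_of ((Z, x1 - y1) # rest) - frag_of ((Z, y1) # rest))"
      by (simp add: frag_extend_diff)
    also have "\<dots> \<in> bsub n x" by (rule bsub_diff[OF bsub_diff[OF P1 P2] r])
    finally show "?P (x1 - y1)" .
  next
    fix p show "?P (frag_of p)" by simp
  qed
qed

lemma bsub_move_act:
  assumes a: "a \<in> carrier (ZM z)" and k: "(U, vs) \<in> normal_keys n' p'" and ne: "vs \<noteq> []"
  shows "frag_of ((U * z, ZM_act U a) # std_word vs) - frag_of ((z, a) # act_word U (std_word vs)) \<in> bsub (Suc n') (z * p')"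
proof -
  obtain v vs' where vs: "vs = v # vs'" using ne by (cases vs) auto
  have kk: "length vs = n'" "U * prod_list vs = p'" using k by (auto simp: normal_keys_def)
  let ?w = "(z, a) # std_word vs"
  have w: "length ?w = Suc n'" "\<forall>(z, a) \<in> set ?w. a \<in> carrier (ZM z)" "Suc 0 < Suc n'"
     "U * prod_list (map fst ?w) = z * p'"
    using kk a std_word_carrier[of vs] vs by (auto simp: mult_ac)
  have e1: "?w[0 := (U * fst (?w!0), ZM_act U (snd (?w!0)))] = (U * z, ZM_act U a) # std_word vs" by simp
  have e2: "?w[Suc 0 := (U * fst (?w!Suc 0), ZM_act U (snd (?w!Suc 0)))] = (z, a) # act_word U (std_word vs)"
    using vs by (simp add: std_word_Cons act_word_def)
  have "frag_of (?w[0 := (U * fst (?w!0), ZM_act U (snd (?w!0)))]) - frag_of (?w[Suc 0 := (U * fst (?w!Suc 0), ZM_act U (snd (?w!Suc 0)))])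
          \<in> bsub (Suc n') (z * p')"
    by (rule brels_bsub[OF brels_move_act[OF w]])
  then show ?thesis using e1 e2 by simp
qed

lemma bsub_first_letter:
  assumes k: "(U, vs) \<in> normal_keys n' p'" and p: "fst p * snd p = z"
  shows "frag_of ((U * z, frag_of (U * fst p, snd p)) # std_word vs)
          - (if snd p = 1 then 0 else key_word (fst p * U, snd p # vs)) \<in> bsub (Suc n') (z * p')"
proof (cases "snd p = 1")
  case True
  have kk: "length vs = n'" "U * prod_list vs = p'" using k by (auto simp: normal_keys_def)
  have z: "z = fst p" using p True by simp
  let ?w = "(U * z, frag_of (U * fst p, 1)) # std_word vs"
  have wb: "?w \<in> bwords (Suc n') (z * p')"
    using kk std_word_carrier[of vs] z by (auto simp: bwords_def carrier_ZM mult_ac)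
  have "frag_of ?w \<in> bsub (Suc n') (z * p')"
    using brels_bsub[OF brels_degenerate[OF wb, of 0]] z by simp
  then show ?thesis using True by simp
next
  case False
  have "act_word (fst p * U) (std_word (snd p # vs)) = (U * z, frag_of (U * fst p, snd p)) # std_word vs"
    using p by (simp add: act_word_std_word_Cons mult_ac)
  then show ?thesis using False by (simp add: key_word_def)
qed

definition cons_key_word :: "('m::comm_monoid_mult \<times> 'm) \<Rightarrow> ('m \<times> 'm list) \<Rightarrow> ('m bword \<Rightarrow>\<^sub>0 int)" where
  "cons_key_word p k = (if snd p = 1 then 0 else key_word (fst p * fst k, snd p # snd k))"

text \<open>
  Prepending a letter a to the key word u_*[(e,v_1)|...]: the action u_* moves onto a, and
  expanding u_* a into basis elements (u w, v) gives the key words (w u, v # vs), or a degenerate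
  word when v = e.
\<close>

lemma bsub_cons_key_word:
  assumes a: "a \<in> carrier (ZM z)" and k: "(U, vs) \<in> normal_keys n' p'" and n0: "n' = 0 \<Longrightarrow> p' = 1"
  shows "frag_of ((z, a) # act_word U (std_word vs)) - frag_extend (\<lambda>p. cons_key_word p (U, vs)) a \<in> bsub (Suc n') (z * p')"
proof -
  have kk: "length vs = n'" "1 \<notin> set vs" "U * prod_list vs = p'" using k by (auto simp: normal_keys_def)
  let ?T0 = "frag_of ((z, a) # act_word U (std_word vs))"
  let ?T1 = "frag_of ((U * z, ZM_act U a) # std_word vs)"
  let ?F = "frag_extend (\<lambda>p. frag_of ((U * z, frag_of (U * fst p, snd p)) # std_word vs)) a"
  have s1: "?T0 - ?T1 \<in> bsub (Suc n') (z * p')"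
  proof (cases "vs = []")
    case True
    then have "U = 1" using kk n0 by simp
    then show ?thesis using True by (simp add: act_word_def ZM_act_one)
  next
    case False
    then have "?T1 - ?T0 \<in> bsub (Suc n') (z * p')" by (rule bsub_move_act[OF a k])
    then show ?thesis using bsub_neg by fastforce
  qed
  have W: "(U * z, c) # std_word vs \<in> bwords (Suc n') (z * p')" if "c \<in> carrier (ZM (U * z))" for c
    using that kk std_word_carrier[of vs] by (auto simp: bwords_def mult_ac)
  have s2': "?T1 - frag_extend (\<lambda>q. frag_of ((U * z, frag_of q) # std_word vs)) (ZM_act U a) \<in> bsub (Suc n') (z * p')"
    by (rule bsub_expand_first[OF W ZM_act_carrier[OF a]])
  have "frag_extend (\<lambda>q. frag_of ((U * z, frag_of q) # std_word vs)) (ZM_act U a) = ?F"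
    by (simp add: ZM_act_alt frag_extend_extend)
  with s2' have s2: "?T1 - ?F \<in> bsub (Suc n') (z * p')" by simp
  have s3: "?F - frag_extend (\<lambda>p. cons_key_word p (U, vs)) a \<in> bsub (Suc n') (z * p')"
    unfolding frag_extend_diff_fun[symmetric]
  proof (rule bsub_extend)
    fix p assume "p \<in> Poly_Mapping.keys a"
    then have pz: "fst p * snd p = z" using a by (auto simp: carrier_ZM)
    have "frag_of ((U * z, frag_of (U * fst p, snd p)) # std_word vs)
          - (if snd p = 1 then 0 else key_word (fst p * U, snd p # vs)) \<in> bsub (Suc n') (z * p')"
      by (rule bsub_first_letter[OF k pz])
    then show "frag_of ((U * z, frag_of (U * fst p, snd p)) # std_word vs) - cons_key_word p (U, vs) \<in> bsub (Suc n') (z * p')"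
      by (simp only: cons_key_word_def fst_conv snd_conv)
  qed
  have "?T0 - frag_extend (\<lambda>p. cons_key_word p (U, vs)) a = (?T0 - ?T1) + (?T1 - ?F) + (?F - frag_extend (\<lambda>p. cons_key_word p (U, vs)) a)"
    by simp
  also have "\<dots> \<in> bsub (Suc n') (z * p')" using s1 s2 s3 by (intro bsub_add)
  finally show ?thesis .
qed

lemma key_chain_drop_degenerate_prepend_letter:
  assumes "\<And>k. k \<in> Poly_Mapping.keys Y \<Longrightarrow> 1 \<notin> set (snd k)"
  shows "key_chain (drop_degenerate (prepend_letter a Y)) = frag_extend (\<lambda>p. frag_extend (\<lambda>k. cons_key_word p k) Y) a"
proof -
  have "key_chain (drop_degenerate (prepend_letter a Y)) = frag_extend (\<lambda>p. frag_extend (\<lambda>k. key_chain (drop_degenerate (frag_of (fst p * fst k, snd p # snd k)))) Y) a"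
    by (simp add: key_chain_def drop_degenerate_def prepend_letter_def frag_extend_extend)
  also have "\<dots> = frag_extend (\<lambda>p. frag_extend (\<lambda>k. cons_key_word p k) Y) a"
  proof (intro frag_extend_eq)
    fix p k assume "k \<in> Poly_Mapping.keys Y"
    then have "1 \<notin> set (snd k)" by (rule assms)
    then show "key_chain (drop_degenerate (frag_of (fst p * fst k, snd p # snd k))) = cons_key_word p k"
      by (simp add: key_chain_def drop_degenerate_def cons_key_word_def)
  qed
  finally show ?thesis .
qed

lemma normal_word_Cons: "normal_word x (c # w) = drop_degenerate (prepend_letter (snd c) (normal_word (prod_list (map fst w)) w))"
proof (cases "w = []")
  case True then show ?thesis by (simp add: normal_word_def drop_degenerate_def)
next
  case False then show ?thesis by (simp add: normal_word_def drop_degenerate_prepend_letter[of _ "expand_letters (map snd w)"])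
qed

lemma word_minus_normal_in_bsub:
  "w \<in> bwords n x \<Longrightarrow> frag_of w - key_chain (normal_word x w) \<in> bsub n x"
proof (induction w arbitrary: n x)
  case Nil
  then show ?case by (simp add: normal_word_def key_chain_def key_word_def act_word_def)
next
  case (Cons c w')
  obtain z a where c: "c = (z, a)" by fastforce
  obtain n' where n: "n = Suc n'" using Cons.prems by (cases n) (auto simp: bwords_def)
  define p' where "p' = prod_list (map fst w')"
  have a: "a \<in> carrier (ZM z)" and w': "w' \<in> bwords n' p'" and x: "x = z * p'"
    using Cons.prems c n by (auto simp: bwords_Cons p'_def)
  have n0: "n' = 0 \<Longrightarrow> p' = 1" using w' by (auto simp: bwords_def p'_def)
  define Y where "Y = normal_word p' w'"
  have kY: "Poly_Mapping.keys Y \<subseteq> normal_keys n' p'" unfolding Y_def by (rule keys_normal_word[OF w'])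
  have IH: "frag_of w' - key_chain Y \<in> bsub n' p'" unfolding Y_def by (rule Cons.IH[OF w'])
  have s1: "frag_of (c # w') - cons_chain c (key_chain Y) \<in> bsub n x"
    using cons_chain_bsub[of c, OF _ IH] a c n x by (simp add: cons_chain_diff)
  have "cons_chain c (key_chain Y) = frag_extend (\<lambda>k. frag_of (c # act_word (fst k) (std_word (snd k)))) Y"
    by (simp add: cons_chain_def key_chain_def key_word_def frag_extend_extend)
  moreover have "frag_extend (\<lambda>k. frag_of (c # act_word (fst k) (std_word (snd k))) - frag_extend (\<lambda>p. cons_key_word p k) a) Y \<in> bsub n x"
  proof (rule bsub_extend)
    fix k assume "k \<in> Poly_Mapping.keys Y"
    then have "k \<in> normal_keys n' p'" using kY by blast
    then have "(fst k, snd k) \<in> normal_keys n' p'" by simp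
    from bsub_cons_key_word[OF a this n0]
    show "frag_of (c # act_word (fst k) (std_word (snd k))) - frag_extend (\<lambda>p. cons_key_word p k) a \<in> bsub n x"
      using c n x by simp
  qed
  ultimately have s2: "cons_chain c (key_chain Y) - frag_extend (\<lambda>k. frag_extend (\<lambda>p. cons_key_word p k) a) Y \<in> bsub n x"
    by (simp add: frag_extend_diff_fun)
  have "key_chain (normal_word x (c # w')) = key_chain (drop_degenerate (prepend_letter a Y))"
    using c by (simp add: normal_word_Cons Y_def p'_def)
  also have "\<dots> = frag_extend (\<lambda>p. frag_extend (\<lambda>k. cons_key_word p k) Y) a"
    using kY by (intro key_chain_drop_degenerate_prepend_letter) (auto simp: normal_keys_def)
  also have "\<dots> = frag_extend (\<lambda>k. frag_extend (\<lambda>p. cons_key_word p k) a) Y"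
    by (rule frag_extend_swap)
  finally have e: "key_chain (normal_word x (c # w')) = frag_extend (\<lambda>k. frag_extend (\<lambda>p. cons_key_word p k) a) Y" .
  have "frag_of (c # w') - key_chain (normal_word x (c # w')) = (frag_of (c # w') - cons_chain c (key_chain Y)) + (cons_chain c (key_chain Y) - frag_extend (\<lambda>k. frag_extend (\<lambda>p. cons_key_word p k) a) Y)"
    using e by simp
  also have "\<dots> \<in> bsub n x" using s1 s2 by (rule bsub_add)
  finally show ?case .
qed

lemma chain_minus_normal_in_bsub:
  assumes r: "r \<in> carrier (bfree n x)" shows "r - key_chain (normal_form x r) \<in> bsub n x"
proof -
  have "r - key_chain (normal_form x r) = frag_extend (\<lambda>w. frag_of w - key_chain (normal_word x w)) r"
    by (simp add: frag_extend_diff_fun key_chain_def normal_form_def frag_extend_extend frag_expansion[symmetric])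
  also have "\<dots> \<in> bsub n x"
  proof (rule bsub_extend)
    fix w assume "w \<in> Poly_Mapping.keys r"
    then have "w \<in> bwords n x" using r by (auto simp: bfree_def)
    then show "frag_of w - key_chain (normal_word x w) \<in> bsub n x" by (rule word_minus_normal_in_bsub)
  qed
  finally show ?thesis .
qed

lemma bsub_iff_normal_form_eq_0:
  assumes r: "r \<in> carrier (bfree n x)" shows "r \<in> bsub n x \<longleftrightarrow> normal_form x r = 0"
  using normal_form_bsub chain_minus_normal_in_bsub[OF r] by (auto simp: key_chain_def)

lemma bsub_normal: "bsub n x \<lhd> bfree n x"
  using comm_group.subgroup_imp_normal[OF bfree_comm_group bsub_subgroup] .

lemma BZM_group: "group (BZM n x)"
  unfolding BZM_def by (rule normal.factorgroup_is_group[OF bsub_normal])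

lemma carrier_BZM: "carrier (BZM n x) = bclass n x ` carrier (bfree n x)"
  by (simp add: BZM_def carrier_FactGroup bclass_def image_def)

lemma bclass_carrier: "r \<in> carrier (bfree n x) \<Longrightarrow> bclass n x r \<in> carrier (BZM n x)"
  by (simp add: carrier_BZM)

lemma mult_BZM:
  assumes "r \<in> carrier (bfree n x)" "s \<in> carrier (bfree n x)"
  shows "bclass n x r \<otimes>\<^bsub>BZM n x\<^esub> bclass n x s = bclass n x (r + s)"
  using normal.rcos_sum[OF bsub_normal assms] by (simp add: BZM_def bclass_def bfree_def)

lemma one_BZM: "\<one>\<^bsub>BZM n x\<^esub> = bclass n x 0"
proof -
  have sg: "subgroup (bsub n x) (bfree n x)" by (rule bsub_subgroup)
  have o: "\<one>\<^bsub>bfree n x\<^esub> \<in> bsub n x" by (rule subgroup.one_closed[OF sg])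
  have "bsub n x #>\<^bsub>bfree n x\<^esub> \<one>\<^bsub>bfree n x\<^esub> = bsub n x"
    by (rule group.coset_join2[OF bfree_group subgroup.mem_carrier[OF sg o] sg o])
  then show ?thesis by (simp add: BZM_def bclass_def bfree_def)
qed

lemma bclass_mem: "r \<in> carrier (bfree n x) \<Longrightarrow> r \<in> bclass n x r"
  unfolding bclass_def
  using group.rcos_self[OF bfree_group _ bsub_subgroup] by blast

lemma bclass_elem:
  assumes r: "r \<in> carrier (bfree n x)" and s: "s \<in> bclass n x r"
  shows "s \<in> carrier (bfree n x) \<and> normal_form x s = normal_form x r"
proof -
  have sc: "s \<in> carrier (bfree n x)"
    using s r subgroup.elemrcos_carrier[OF bsub_subgroup bfree_group] unfolding bclass_def by blast
  have "s \<otimes>\<^bsub>bfree n x\<^esub> inv\<^bsub>bfree n x\<^esub> r \<in> bsub n x"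
    using subgroup.rcos_module_imp[OF bsub_subgroup bfree_group r] s unfolding bclass_def by blast
  then have "s - r \<in> bsub n x" using r by (simp add: bfree_def)
  then have "normal_form x (s - r) = 0" by (rule normal_form_bsub)
  then show ?thesis using sc by (simp add: normal_form_diff)
qed

lemma bclass_eq_iff:
  assumes r: "r \<in> carrier (bfree n x)" and s: "s \<in> carrier (bfree n x)"
  shows "bclass n x r = bclass n x s \<longleftrightarrow> normal_form x r = normal_form x s"
proof
  assume "bclass n x r = bclass n x s"
  then have "r \<in> bclass n x s" using bclass_mem[OF r] by simp
  then show "normal_form x r = normal_form x s" using bclass_elem[OF s] by simp
next
  assume e: "normal_form x r = normal_form x s"
  have rs: "r - s \<in> carrier (bfree n x)" using r s keys_diff[of r s] by (auto simp: bfree_def)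
  have "normal_form x (r - s) = 0" using e by (simp add: normal_form_diff)
  then have "r - s \<in> bsub n x" using bsub_iff_normal_form_eq_0[OF rs] by simp
  then have "r \<otimes>\<^bsub>bfree n x\<^esub> inv\<^bsub>bfree n x\<^esub> s \<in> bsub n x" using s by (simp add: bfree_def)
  then have "r \<in> bsub n x #>\<^bsub>bfree n x\<^esub> s"
    using subgroup.rcos_module_rev[OF bsub_subgroup bfree_group s r] by blast
  then have "bsub n x #>\<^bsub>bfree n x\<^esub> s = bsub n x #>\<^bsub>bfree n x\<^esub> r"
    using group.repr_independence[OF bfree_group _ s bsub_subgroup] by blast
  then show "bclass n x r = bclass n x s" by (simp add: bclass_def)
qed

lemma bclass_some_rep:
  assumes r: "r \<in> carrier (bfree n x)"
  shows "(SOME s. s \<in> bclass n x r) \<in> carrier (bfree n x) \<and> normal_form x (SOME s. s \<in> bclass n x r) = normal_form x r"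
proof -
  have "(SOME s. s \<in> bclass n x r) \<in> bclass n x r" using bclass_mem[OF r] by (rule someI)
  then show ?thesis using bclass_elem[OF r] by blast
qed

definition chain_act :: "'m::comm_monoid_mult \<Rightarrow> ('m bword \<Rightarrow>\<^sub>0 int) \<Rightarrow> ('m bword \<Rightarrow>\<^sub>0 int)" where
  "chain_act y r = frag_extend (\<lambda>w. frag_of (act_word y w)) r"

lemma act_word_bwords: "w \<in> bwords n x \<Longrightarrow> act_word y w \<in> bwords n (x * y)"
proof (cases w)
  case Nil then show "w \<in> bwords n x \<Longrightarrow> act_word y w \<in> bwords n (x * y)"
    by (simp add: bwords_def act_word_def)
next
  case (Cons c w')
  assume w: "w \<in> bwords n x"
  have c: "snd c \<in> carrier (ZM (fst c))" "\<forall>(z, a) \<in> set w'. a \<in> carrier (ZM z)"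
    "length w = n" "fst c * prod_list (map fst w') = x"
    using w Cons by (auto simp: bwords_def)
  have "ZM_act y (snd c) \<in> carrier (ZM (y * fst c))" by (rule ZM_act_carrier[OF c(1)])
  then show ?thesis using c Cons by (auto simp: bwords_def act_word_def mult_ac)
qed

lemma chain_act_carrier: "r \<in> carrier (bfree n x) \<Longrightarrow> chain_act y r \<in> carrier (bfree n (x * y))"
  unfolding chain_act_def bfree_def carrier_free_Abelian_group_iff
  by (rule keys_frag_extend_sub) (auto intro: act_word_bwords)

lemma normal_form_chain_act: "normal_form (x * y) (chain_act y r) = shift_keys y (normal_form x r)"
  by (simp add: normal_form_def chain_act_def shift_keys_def frag_extend_extend normal_word_act_word[unfolded shift_keys_def])

lemma BZM_act_class:
  assumes r: "r \<in> carrier (bfree n x)"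
  shows "BZM_act n x y (bclass n x r) = bclass n (x * y) (chain_act y r)"
proof -
  let ?s = "SOME s. s \<in> bclass n x r"
  have s: "?s \<in> carrier (bfree n x)" "normal_form x ?s = normal_form x r" using bclass_some_rep[OF r] by auto
  have "bclass n (x * y) (chain_act y ?s) = bclass n (x * y) (chain_act y r)"
    using chain_act_carrier[OF s(1)] chain_act_carrier[OF r] s(2)
    by (simp add: bclass_eq_iff normal_form_chain_act)
  then show ?thesis by (simp add: BZM_act_def chain_act_def)
qed

lemma BZM_act_carrier:
  assumes "c \<in> carrier (BZM n x)" shows "BZM_act n x y c \<in> carrier (BZM n (x * y))"
proof -
  obtain r where r: "r \<in> carrier (bfree n x)" "c = bclass n x r" using assms by (auto simp: carrier_BZM)
  then show ?thesis using BZM_act_class[OF r(1)] bclass_carrier[OF chain_act_carrier[OF r(1)]] by simp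
qed

section \<open>The bar differential in normal form\<close>

definition merge_at :: "nat \<Rightarrow> 'm::comm_monoid_mult list \<Rightarrow> 'm list" where
  "merge_at i vs = take (i - 1) vs @ [vs!(i - 1) * vs!i] @ drop (Suc i) vs"

definition face_first :: "('m::comm_monoid_mult \<times> 'm list) \<Rightarrow> (('m \<times> 'm list) \<Rightarrow>\<^sub>0 int)" where
  "face_first k = frag_of (fst k * hd (snd k), tl (snd k))"

definition face_merge :: "nat \<Rightarrow> ('m::comm_monoid_mult \<times> 'm list) \<Rightarrow> (('m \<times> 'm list) \<Rightarrow>\<^sub>0 int)" where
  "face_merge i k = frag_of (fst k, merge_at i (snd k))"

definition face_last :: "('m::comm_monoid_mult \<times> 'm list) \<Rightarrow> (('m \<times> 'm list) \<Rightarrow>\<^sub>0 int)" where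
  "face_last k = frag_of (fst k * last (snd k), butlast (snd k))"

text \<open>
  The bar differential of a key word, written in keys: since \<epsilon> = 1 on basis elements, the outer faces
  move v_1 resp. v_n into the action and the inner faces multiply neighbouring entries.
\<close>

definition key_diff :: "('m::comm_monoid_mult \<times> 'm list) \<Rightarrow> (('m \<times> 'm list) \<Rightarrow>\<^sub>0 int)" where
  "key_diff k = face_first k + (\<Sum>i\<in>{1..<length (snd k)}. frag_cmul ((-1) ^ i) (face_merge i k))
          + frag_cmul ((-1) ^ length (snd k)) (face_last k)"

lemma keys_expand_letters_length: "Poly_Mapping.keys (expand_letters as) \<subseteq> {k. length (snd k) = length as}"
proof (induction as)
  case Nil then show ?case by simp
next
  case (Cons a as)
  show ?case using keys_prepend_letter[OF subset_refl Cons.IH, of a] by auto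
qed

lemma prepend_letter_cmul_right: "prepend_letter a (frag_cmul c Q) = frag_cmul c (prepend_letter a Q)"
  by (simp add: prepend_letter_def frag_extend_cmul frag_extend_cmul_fun)

lemma face_first_prepend_letter:
  assumes "\<And>p. p \<in> Poly_Mapping.keys a \<Longrightarrow> fst p * snd p = z"
  shows "frag_extend face_first (prepend_letter a Q) = frag_cmul (ZM_eps a) (shift_keys z Q)"
proof -
  have "frag_extend face_first (prepend_letter a Q) = frag_extend (\<lambda>p. frag_extend (\<lambda>k. frag_of (fst p * fst k * snd p, snd k)) Q) a"
    by (simp add: prepend_letter_def frag_extend_extend face_first_def)
  also have "\<dots> = frag_cmul (ZM_eps a) (shift_keys z Q)"
  proof (rule frag_extend_const_ZM_eps)
    fix p assume "p \<in> Poly_Mapping.keys a"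
    then have "fst p * snd p = z" by (rule assms)
    then show "frag_extend (\<lambda>k. frag_of (fst p * fst k * snd p, snd k)) Q = shift_keys z Q"
      by (auto simp: shift_keys_def mult_ac)
  qed
  finally show ?thesis .
qed

lemma face_merge_Suc_prepend_letter:
  assumes "1 \<le> j" "\<And>k. k \<in> Poly_Mapping.keys Q \<Longrightarrow> j < length (snd k)"
  shows "frag_extend (face_merge (Suc j)) (prepend_letter a Q) = prepend_letter a (frag_extend (face_merge j) Q)"
proof -
  have "frag_extend (face_merge (Suc j)) (prepend_letter a Q) = frag_extend (\<lambda>p. frag_extend (\<lambda>k. face_merge (Suc j) (fst p * fst k, snd p # snd k)) Q) a"
    by (simp add: prepend_letter_def frag_extend_extend)
  also have "\<dots> = frag_extend (\<lambda>p. frag_extend (\<lambda>k. frag_of (fst p * fst k, snd p # merge_at j (snd k))) Q) a"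
  proof (intro frag_extend_eq)
    fix p k assume "k \<in> Poly_Mapping.keys Q"
    then have jl: "j < length (snd k)" by (rule assms(2))
    obtain j' where j': "j = Suc j'" using assms(1) by (cases j) auto
    show "face_merge (Suc j) (fst p * fst k, snd p # snd k) = frag_of (fst p * fst k, snd p # merge_at j (snd k))"
      using j' jl by (simp add: face_merge_def merge_at_def)
  qed
  also have "\<dots> = prepend_letter a (frag_extend (face_merge j) Q)"
    by (simp add: prepend_letter_def frag_extend_extend face_merge_def)
  finally show ?thesis .
qed

lemma face_merge_expand_letters:
  "1 \<le> i \<Longrightarrow> i < length as \<Longrightarrow>
    frag_extend (face_merge i) (expand_letters as) = expand_letters (take (i - 1) as @ [ZM_mult (as!(i - 1)) (as!i)] @ drop (Suc i) as)"
proof (induction as arbitrary: i)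
  case Nil then show ?case by simp
next
  case (Cons a as)
  show ?case
  proof (cases "i = 1")
    case True
    then obtain b as' where as: "as = b # as'" using Cons.prems by (cases as) auto
    have "frag_extend (face_merge 1) (expand_letters (a # b # as')) =
          frag_extend (\<lambda>p. frag_extend (\<lambda>q. frag_extend (\<lambda>k. frag_of (fst p * (fst q * fst k), snd p * snd q # snd k)) (expand_letters as')) b) a"
      by (simp add: prepend_letter_def frag_extend_extend face_merge_def merge_at_def)
    also have "\<dots> = expand_letters (ZM_mult a b # as')"
      by (simp add: prepend_letter_def ZM_mult_def frag_extend_extend mult.assoc)
    finally show ?thesis using True as by simp
  next
    case False
    then obtain j where j: "i = Suc j" "1 \<le> j" "j < length as" using Cons.prems by (cases i) auto
    have kl: "j < length (snd k)" if "k \<in> Poly_Mapping.keys (expand_letters as)" for k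
      using keys_expand_letters_length[of as] that j by auto
    have "frag_extend (face_merge i) (expand_letters (a # as)) = prepend_letter a (frag_extend (face_merge j) (expand_letters as))"
      using j kl by (simp add: face_merge_Suc_prepend_letter)
    also have "\<dots> = prepend_letter a (expand_letters (take (j - 1) as @ [ZM_mult (as!(j - 1)) (as!j)] @ drop (Suc j) as))"
      using Cons.IH j by simp
    also have "\<dots> = expand_letters (take (i - 1) (a # as) @ [ZM_mult ((a # as)!(i - 1)) ((a # as)!i)] @ drop (Suc i) (a # as))"
      using j by (cases j) auto
    finally show ?thesis .
  qed
qed

lemma face_last_expand_letters:
  assumes "as \<noteq> []" "\<And>p. p \<in> Poly_Mapping.keys (last as) \<Longrightarrow> fst p * snd p = z"
  shows "frag_extend face_last (expand_letters as) = frag_cmul (ZM_eps (last as)) (shift_keys z (expand_letters (butlast as)))"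
  using assms
proof (induction as)
  case Nil then show ?case by simp
next
  case (Cons a as)
  show ?case
  proof (cases "as = []")
    case True
    have "frag_extend face_last (expand_letters [a]) = frag_extend (\<lambda>p. frag_of (fst p * snd p, [])) a"
      by (simp add: prepend_letter_def frag_extend_extend face_last_def)
    also have "\<dots> = frag_cmul (ZM_eps a) (shift_keys z (expand_letters []))"
      using Cons.prems True by (intro frag_extend_const_ZM_eps) (simp add: shift_keys_def)
    finally show ?thesis using True by simp
  next
    case False
    have kl: "snd k \<noteq> []" if "k \<in> Poly_Mapping.keys (expand_letters as)" for k
      using keys_expand_letters_length[of as] that False by auto
    have "frag_extend face_last (expand_letters (a # as)) = frag_extend (\<lambda>p. frag_extend (\<lambda>k. face_last (fst p * fst k, snd p # snd k)) (expand_letters as)) a"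
      by (simp add: prepend_letter_def frag_extend_extend)
    also have "\<dots> = frag_extend (\<lambda>p. frag_extend (\<lambda>k. frag_extend (\<lambda>k'. frag_of (fst p * fst k', snd p # snd k')) (face_last k)) (expand_letters as)) a"
      using kl by (intro frag_extend_eq) (simp add: face_last_def mult.assoc)
    also have "\<dots> = prepend_letter a (frag_extend face_last (expand_letters as))"
      by (simp add: prepend_letter_def frag_extend_extend)
    also have "\<dots> = prepend_letter a (frag_cmul (ZM_eps (last as)) (shift_keys z (expand_letters (butlast as))))"
      using Cons False by simp
    also have "\<dots> = frag_cmul (ZM_eps (last (a # as))) (shift_keys z (expand_letters (butlast (a # as))))"
      using False by (simp add: prepend_letter_cmul_right prepend_letter_shift_keys)
    finally show ?thesis .
  qed
qed

lemma drop_degenerate_of: "drop_degenerate (frag_of k) = (if 1 \<in> set (snd k) then 0 else frag_of k)"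
  by (simp add: drop_degenerate_def)

lemma drop_degenerate_cmul: "drop_degenerate (frag_cmul c Q) = frag_cmul c (drop_degenerate Q)"
  by (simp add: drop_degenerate_def frag_extend_cmul)

lemma drop_degenerate_zero [simp]: "drop_degenerate 0 = 0"
  by (simp add: drop_degenerate_def)

lemma drop_degenerate_sum: "drop_degenerate (sum f I) = (\<Sum>i\<in>I. drop_degenerate (f i))"
  by (induction I rule: infinite_finite_induct) (auto simp: drop_degenerate_add)

lemma drop_degenerate_key_diff:
  "drop_degenerate (key_diff k) = drop_degenerate (face_first k)
     + (\<Sum>i\<in>{1..<length (snd k)}. frag_cmul ((-1) ^ i) (drop_degenerate (face_merge i k)))
     + frag_cmul ((-1) ^ length (snd k)) (drop_degenerate (face_last k))"
  by (simp add: key_diff_def drop_degenerate_add drop_degenerate_sum drop_degenerate_cmul)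

lemma nth_mem_tl: "0 < k \<Longrightarrow> k < length xs \<Longrightarrow> xs ! k \<in> set (tl xs)"
  by (cases xs) auto

lemma nth_mem_butlast: "k < length xs - 1 \<Longrightarrow> xs ! k \<in> set (butlast xs)"
  by (metis length_butlast nth_butlast nth_mem)

lemma nth_merge_at_low: "j < i - 1 \<Longrightarrow> i < length vs \<Longrightarrow> merge_at i vs ! j = vs ! j"
  by (simp add: merge_at_def nth_append)

lemma nth_merge_at_high:
  assumes "1 \<le> i" "i < j" "j < length vs" shows "merge_at i vs ! (j - 1) = vs ! j"
proof -
  have L: "length (take (i - 1) vs) = i - 1" using assms by simp
  have m: "merge_at i vs = take (i - 1) vs @ ((vs!(i - 1) * vs!i) # drop (Suc i) vs)" by (simp add: merge_at_def)
  have nl: "\<not> j - 1 < i - 1" using assms by arith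
  have e: "j - 1 - (i - 1) = Suc (j - i - 1)" using assms by arith
  have "merge_at i vs ! (j - 1) = ((vs!(i - 1) * vs!i) # drop (Suc i) vs) ! (j - 1 - (i - 1))"
    unfolding m nth_append L using nl by simp
  also have "\<dots> = drop (Suc i) vs ! (j - i - 1)" unfolding e by simp
  also have "\<dots> = vs ! (Suc i + (j - i - 1))" using assms by (simp add: nth_drop)
  also have "Suc i + (j - i - 1) = j" using assms by arith
  finally show ?thesis .
qed

lemma length_merge_at: "1 \<le> i \<Longrightarrow> i < length vs \<Longrightarrow> length (merge_at i vs) = length vs - 1"
  by (simp add: merge_at_def)

lemma prod_merge_at: "1 \<le> i \<Longrightarrow> i < length zs \<Longrightarrow> prod_list (merge_at i zs) = prod_list (zs :: 'm::comm_monoid_mult list)"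
proof -
  assume i: "1 \<le> i" "i < length zs"
  have d1: "drop (i - 1) zs = zs!(i - 1) # drop i zs" using i Cons_nth_drop_Suc[of "i - 1" zs] by simp
  have d2: "drop i zs = zs!i # drop (Suc i) zs" using i by (simp add: Cons_nth_drop_Suc)
  have "prod_list zs = prod_list (take (i - 1) zs @ drop (i - 1) zs)" by simp
  also have "\<dots> = prod_list (take (i - 1) zs) * (zs!(i - 1) * (zs!i * prod_list (drop (Suc i) zs)))"
    unfolding prod_list.append d1 d2 by simp
  also have "\<dots> = prod_list (merge_at i zs)" by (simp add: merge_at_def mult.assoc)
  finally show ?thesis by simp
qed

lemma one_in_merge_at:
  assumes "vs ! k = 1" "k < length vs" "1 \<le> i" "i < length vs" "i \<noteq> k" "i \<noteq> Suc k"
  shows "1 \<in> set (merge_at i vs)"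
proof (cases "k < i - 1")
  case True
  then have "merge_at i vs ! k = 1" using assms nth_merge_at_low by metis
  moreover have "k < length (merge_at i vs)" using True assms length_merge_at[OF assms(3,4)] by simp
  ultimately show ?thesis by (metis nth_mem)
next
  case False
  then have ki: "i < k" using assms by simp
  then have "merge_at i vs ! (k - 1) = 1" using assms nth_merge_at_high by metis
  moreover have "k - 1 < length (merge_at i vs)" using ki assms length_merge_at[OF assms(3,4)] by simp
  ultimately show ?thesis by (metis nth_mem)
qed

lemma merge_at_unit:
  assumes "1 \<le> k" "Suc k < length vs" "vs ! k = 1"
  shows "merge_at k vs = merge_at (Suc k) vs"
proof -
  have t: "take k vs = take (k - 1) vs @ [vs ! (k - 1)]"
    using assms take_Suc_conv_app_nth[of "k - 1" vs] by simp
  have d: "drop k vs = vs ! k # drop (Suc k) vs" "drop (Suc k) vs = vs ! Suc k # drop (Suc (Suc k)) vs"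
    using assms(1,2) by (simp_all add: Cons_nth_drop_Suc)
  show ?thesis unfolding merge_at_def using assms t d by simp
qed

lemma merge_at_first_unit: "2 \<le> length vs \<Longrightarrow> vs ! 0 = 1 \<Longrightarrow> merge_at 1 vs = tl vs"
  by (cases vs; cases "tl vs") (auto simp: merge_at_def)

lemma merge_at_last:
  assumes "2 \<le> length vs" "vs ! (length vs - 1) = 1"
  shows "merge_at (length vs - 1) vs = butlast vs"
proof -
  define m where "m = length vs - 1"
  have m: "1 \<le> m" "Suc m = length vs" using assms(1) by (auto simp: m_def)
  have t: "take m vs = take (m - 1) vs @ [vs ! (m - 1)]"
    using m take_Suc_conv_app_nth[of "m - 1" vs] by simp
  have dr: "drop (Suc m) vs = []" using m by simp
  have "merge_at m vs = take (m - 1) vs @ [vs!(m - 1) * vs!m]" using dr by (simp add: merge_at_def)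
  also have "\<dots> = take m vs" using t assms(2) by (simp add: m_def)
  also have "\<dots> = butlast vs" using m by (simp add: butlast_conv_take m_def)
  finally show ?thesis by (simp add: m_def)
qed

text \<open>
  If v_k = e, the two faces merging v_k with a neighbour coincide and cancel (for k first or last,
  the merging face cancels against the outer face), while every other face still contains e.
\<close>

lemma drop_degenerate_key_diff_unit:
  assumes len: "2 \<le> length vs" and one: "1 \<in> set vs"
  shows "drop_degenerate (key_diff (U, vs)) = 0"
proof -
  define m where "m = length vs"
  obtain k where k: "k < m" "vs ! k = 1" using one by (auto simp: in_set_conv_nth m_def)
  define f where "f i = frag_cmul ((-1) ^ i) (drop_degenerate (face_merge i (U, vs)))" for i
  have split: "drop_degenerate (key_diff (U, vs)) = drop_degenerate (face_first (U, vs))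
      + (\<Sum>i\<in>{1..<m}. f i) + frag_cmul ((-1) ^ m) (drop_degenerate (face_last (U, vs)))"
    by (simp add: drop_degenerate_key_diff f_def m_def)
  have other_faces: "f i = 0" if "i \<in> {1..<m}" "i \<noteq> k" "i \<noteq> Suc k" for i
    using that one_in_merge_at[OF k(2) _ _ _ that(2,3)] k(1) by (simp add: f_def face_merge_def drop_degenerate_of m_def)
  have first_face: "drop_degenerate (face_first (U, vs)) = 0" if "0 < k"
    using nth_mem_tl[OF that, of vs] k by (simp add: face_first_def drop_degenerate_of m_def)
  have last_face: "drop_degenerate (face_last (U, vs)) = 0" if "k < m - 1"
    using nth_mem_butlast[OF that[unfolded m_def]] k by (simp add: face_last_def drop_degenerate_of)
  consider (first) "k = 0" | (last) "0 < k" "k = m - 1" | (inner) "0 < k" "k < m - 1"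
    using k by linarith
  then show ?thesis
  proof cases
    case first
    have "(\<Sum>i\<in>{1..<m}. f i) = (\<Sum>i\<in>{1}. f i)"
      using len first by (intro sum.mono_neutral_right) (auto intro!: other_faces simp: m_def)
    moreover have "f 1 = - drop_degenerate (face_first (U, vs))"
      using merge_at_first_unit[OF len] k first len
      by (cases vs) (auto simp: f_def face_merge_def face_first_def)
    ultimately show ?thesis using split last_face first len by (simp add: m_def)
  next
    case last
    have "(\<Sum>i\<in>{1..<m}. f i) = (\<Sum>i\<in>{m - 1}. f i)"
      using len last by (intro sum.mono_neutral_right) (auto intro!: other_faces simp: m_def)
    moreover have "f (m - 1) + frag_cmul ((-1) ^ m) (drop_degenerate (face_last (U, vs))) = 0"
    proof -
      have ne: "vs \<noteq> []" and mm: "m = Suc (m - 1)" using len by (auto simp: m_def)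
      have "last vs = 1" using k last by (simp add: last_conv_nth[OF ne] m_def)
      moreover have "merge_at (m - 1) vs = butlast vs" using merge_at_last[OF len] k last by (simp add: m_def)
      ultimately show ?thesis
        by (subst mm, simp add: f_def face_merge_def face_last_def frag_cmul_add_uminus)
    qed
    ultimately show ?thesis using split first_face last by simp
  next
    case inner
    have "(\<Sum>i\<in>{1..<m}. f i) = (\<Sum>i\<in>{k, Suc k}. f i)"
      using len inner by (intro sum.mono_neutral_right) (auto intro!: other_faces)
    moreover have "merge_at k vs = merge_at (Suc k) vs" using merge_at_unit[of k vs] inner k by (simp add: m_def)
    then have "f k + f (Suc k) = 0" by (simp add: f_def face_merge_def frag_cmul_add_uminus)
    ultimately show ?thesis using split first_face last_face inner by simp
  qed
qed

lemma bwords_face_first: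
  assumes w: "w \<in> bwords (Suc n) x" shows "act_word (fst (hd w)) (tl w) \<in> bwords n x"
proof -
  obtain c w' where cw: "w = c # w'" using w by (cases w) (auto simp: bwords_def)
  have "w' \<in> bwords n (prod_list (map fst w'))" "x = fst c * prod_list (map fst w')"
    using w cw by (auto simp: bwords_Cons)
  then have h: "act_word (fst c) w' \<in> bwords n (prod_list (map fst w') * fst c)"
    by (intro act_word_bwords) simp
  show ?thesis using h cw \<open>x = fst c * prod_list (map fst w')\<close> by (simp add: mult.commute)
qed

lemma bwords_face_last:
  assumes w: "w \<in> bwords (Suc n) x" shows "act_word (fst (last w)) (butlast w) \<in> bwords n x"
proof -
  have ne: "w \<noteq> []" using w by (auto simp: bwords_def)
  have wsplit: "w = butlast w @ [last w]" using ne by simp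
  have len: "length (butlast w) = n" using w by (auto simp: bwords_def)
  have lt: "\<forall>(z, a) \<in> set (butlast w). a \<in> carrier (ZM z)"
    using w in_set_butlastD by (fastforce simp: bwords_def)
  have "prod_list (map fst w) = x" using w by (auto simp: bwords_def)
  then have px: "prod_list (map fst (butlast w)) * fst (last w) = x"
    by (subst (asm) wsplit) simp
  show ?thesis
  proof (cases "n = 0")
    case True
    then have "butlast w = []" using len by (metis length_0_conv)
    then show ?thesis using True by (simp add: act_word_def bwords_def)
  next
    case False
    then have "butlast w \<in> bwords n (prod_list (map fst (butlast w)))" using len lt by (simp add: bwords_def)
    from act_word_bwords[OF this, of "fst (last w)"] show ?thesis using px by simp
  qed
qed

lemma bwords_face_merge:
  assumes w: "w \<in> bwords (Suc n) x" and i: "1 \<le> i" "i < Suc n"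
  shows "take (i - 1) w @ [(fst (w!(i - 1)) * fst (w!i), ZM_mult (snd (w!(i - 1))) (snd (w!i)))] @ drop (Suc i) w \<in> bwords n x"
    (is "?W \<in> _")
proof -
  have len: "length w = Suc n" and lt: "\<forall>(z, a) \<in> set w. a \<in> carrier (ZM z)" and px: "prod_list (map fst w) = x"
    using w by (auto simp: bwords_def)
  have m1: "snd (w!(i - 1)) \<in> carrier (ZM (fst (w!(i - 1))))" using lt i len nth_mem[of "i - 1" w] by fastforce
  have m2: "snd (w!i) \<in> carrier (ZM (fst (w!i)))" using lt i len nth_mem[of i w] by fastforce
  have mm: "ZM_mult (snd (w!(i - 1))) (snd (w!i)) \<in> carrier (ZM (fst (w!(i - 1)) * fst (w!i)))"
    by (rule ZM_mult_carrier[OF m1 m2])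
  have lt': "\<forall>(z, a) \<in> set ?W. a \<in> carrier (ZM z)"
    using lt mm by (auto dest: in_set_takeD in_set_dropD)
  have "map fst ?W = merge_at i (map fst w)" using i len by (simp add: merge_at_def take_map drop_map)
  then have "prod_list (map fst ?W) = x" using prod_merge_at[of i "map fst w"] i len px by simp
  moreover have "length ?W = n" using i len by simp
  ultimately show ?thesis using lt' by (simp add: bwords_def)
qed

lemma bar_diff_word_carrier:
  assumes w: "w \<in> bwords (Suc n) x" shows "bar_diff_word w \<in> carrier (bfree n x)"
  using bwords_face_first[OF w] bwords_face_merge[OF w] bwords_face_last[OF w] w
  unfolding bar_diff_word_def by (intro bfree_add bfree_cmul bfree_of bfree_sum) (auto simp: bwords_def)

lemma bar_diff_word_0:
  assumes w: "w \<in> bwords (Suc 0) x" shows "bar_diff_word w = 0"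
proof -
  obtain c where c: "w = [c]" using w by (cases w) (auto simp: bwords_def)
  show ?thesis using c frag_cmul_add_uminus[of "ZM_eps (snd c)" "frag_of []"]
    by (simp add: bar_diff_word_def act_word_def)
qed

lemma frag_extend_key_diff:
  assumes "\<And>k. k \<in> Poly_Mapping.keys T \<Longrightarrow> length (snd k) = m"
  shows "frag_extend key_diff T = frag_extend face_first T
           + (\<Sum>i\<in>{1..<m}. frag_cmul ((-1) ^ i) (frag_extend (face_merge i) T))
           + frag_cmul ((-1) ^ m) (frag_extend face_last T)"
proof -
  have "frag_extend key_diff T = frag_extend (\<lambda>k. face_first k + (\<Sum>i\<in>{1..<m}. frag_cmul ((-1) ^ i) (face_merge i k))
          + frag_cmul ((-1) ^ m) (face_last k)) T"
    using assms by (intro frag_extend_eq) (simp add: key_diff_def)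
  then show ?thesis by (simp add: frag_extend_add_fun frag_extend_sum_fun frag_extend_cmul_fun)
qed

lemma expand_letters_bar_diff_word:
  assumes w: "w \<in> bwords (Suc n) x" and n: "1 \<le> n"
  shows "frag_extend (\<lambda>v. expand_letters (map snd v)) (bar_diff_word w)
           = frag_extend key_diff (expand_letters (map snd w))"
proof -
  define as where "as = map snd w"
  define T where "T = expand_letters as"
  have len: "length w = Suc n" and lt: "\<forall>(z, a) \<in> set w. a \<in> carrier (ZM z)"
    using w by (auto simp: bwords_def)
  obtain c w' where cw: "w = c # w'" using len by (cases w) auto
  have w'ne: "w' \<noteq> []" and blne: "butlast w \<noteq> []" and asne: "as \<noteq> []"
    using len n cw by (auto simp: as_def)
  have "length (snd k) = Suc n" if "k \<in> Poly_Mapping.keys T" for k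
    using keys_expand_letters_length[of as] that len by (auto simp: T_def as_def)
  then have faces: "frag_extend key_diff T = frag_extend face_first T
          + (\<Sum>i\<in>{1..<Suc n}. frag_cmul ((-1) ^ i) (frag_extend (face_merge i) T))
          + frag_cmul ((-1) ^ Suc n) (frag_extend face_last T)"
    by (rule frag_extend_key_diff)
  have "\<And>p. p \<in> Poly_Mapping.keys (snd c) \<Longrightarrow> fst p * snd p = fst c"
    using lt cw by (auto simp: carrier_ZM)
  from face_first_prepend_letter[OF this]
  have first: "frag_extend face_first T = frag_cmul (ZM_eps (snd c)) (shift_keys (fst c) (expand_letters (map snd w')))"
    using cw by (simp add: T_def as_def)
  have "last w \<in> set w" using cw by simp
  from bspec[OF lt this] have "snd (last w) \<in> carrier (ZM (fst (last w)))"
    by (simp add: split_beta)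
  then have "\<And>p. p \<in> Poly_Mapping.keys (last as) \<Longrightarrow> fst p * snd p = fst (last w)"
    using last_map[of w snd] cw by (auto simp: carrier_ZM as_def)
  then have "frag_extend face_last T = frag_cmul (ZM_eps (last as)) (shift_keys (fst (last w)) (expand_letters (butlast as)))"
    unfolding T_def by (rule face_last_expand_letters[OF asne])
  then have last: "frag_extend face_last T = frag_cmul (ZM_eps (snd (last w))) (shift_keys (fst (last w)) (expand_letters (butlast as)))"
    using last_map[of w snd] cw by (simp add: as_def)
  have merge: "(\<Sum>i\<in>{1..<Suc n}. frag_cmul ((-1) ^ i) (expand_letters
         (map snd (take (i - 1) w @ [(fst (w!(i - 1)) * fst (w!i), ZM_mult (snd (w!(i - 1))) (snd (w!i)))] @ drop (Suc i) w))))
       = (\<Sum>i\<in>{1..<Suc n}. frag_cmul ((-1) ^ i) (frag_extend (face_merge i) T))"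
    using face_merge_expand_letters[of _ as] len by (intro sum.cong) (simp_all add: T_def as_def take_map drop_map)
  have act_first: "expand_letters (map snd (act_word (fst (hd w)) (tl w))) = shift_keys (fst c) (expand_letters (map snd w'))"
    using expand_letters_act_word[OF w'ne] cw by simp
  have act_last: "expand_letters (map snd (act_word (fst (last w)) (butlast w))) = shift_keys (fst (last w)) (expand_letters (butlast as))"
    using expand_letters_act_word[OF blne] by (simp add: as_def map_butlast)
  show ?thesis
    unfolding bar_diff_word_def frag_extend_add frag_extend_cmul frag_extend_sum[OF finite_atLeastLessThan] comp_def
      frag_extend_of len
    unfolding act_first act_last merge T_def[symmetric] as_def[symmetric] faces first last
    using cw by simp
qed

lemma drop_degenerate_frag_extend:
  "drop_degenerate (frag_extend g r) = frag_extend (\<lambda>v. drop_degenerate (g v)) r"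
  by (simp add: drop_degenerate_def frag_extend_extend)

lemma normal_form_bar_diff_word:
  assumes w: "w \<in> bwords (Suc n) x" and n: "1 \<le> n"
  shows "normal_form x (bar_diff_word w) = drop_degenerate (frag_extend key_diff (expand_letters (map snd w)))"
proof -
  have "normal_word x v = drop_degenerate (expand_letters (map snd v))"
    if "v \<in> Poly_Mapping.keys (bar_diff_word w)" for v
  proof -
    have "v \<in> bwords n x" using that bar_diff_word_carrier[OF w] by (auto simp: bfree_def)
    then have "v \<noteq> []" using n by (auto simp: bwords_def)
    then show ?thesis by (simp add: normal_word_def)
  qed
  then have "normal_form x (bar_diff_word w) = drop_degenerate (frag_extend (\<lambda>v. expand_letters (map snd v)) (bar_diff_word w))"
    unfolding normal_form_def drop_degenerate_frag_extend by (rule frag_extend_eq)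
  then show ?thesis using expand_letters_bar_diff_word[OF w n] by simp
qed

definition normal_diff :: "(('m::comm_monoid_mult \<times> 'm list) \<Rightarrow>\<^sub>0 int) \<Rightarrow> (('m \<times> 'm list) \<Rightarrow>\<^sub>0 int)" where
  "normal_diff Q = drop_degenerate (frag_extend key_diff Q)"

definition bar_diff :: "('m::comm_monoid_mult bword \<Rightarrow>\<^sub>0 int) \<Rightarrow> ('m bword \<Rightarrow>\<^sub>0 int)" where
  "bar_diff r = frag_extend bar_diff_word r"

lemma normal_diff_alt: "normal_diff Q = frag_extend (\<lambda>k. drop_degenerate (key_diff k)) Q"
  by (simp add: normal_diff_def drop_degenerate_def frag_extend_extend)

lemma normal_diff_extend: "normal_diff (frag_extend g r) = frag_extend (\<lambda>w. normal_diff (g w)) r"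
  by (simp add: normal_diff_alt frag_extend_extend)

lemma normal_diff_drop_degenerate:
  assumes "\<And>k. k \<in> Poly_Mapping.keys Q \<Longrightarrow> 2 \<le> length (snd k)"
  shows "normal_diff (drop_degenerate Q) = normal_diff Q"
proof -
  have "normal_diff (drop_degenerate Q) = frag_extend (\<lambda>k. if 1 \<in> set (snd k) then 0 else drop_degenerate (key_diff k)) Q"
    by (simp add: normal_diff_alt drop_degenerate_def frag_extend_extend if_distrib[of "frag_extend _"] cong: if_cong)
  also have "\<dots> = frag_extend (\<lambda>k. drop_degenerate (key_diff k)) Q"
  proof (intro frag_extend_eq)
    fix k assume "k \<in> Poly_Mapping.keys Q"
    then have l: "2 \<le> length (snd k)" by (rule assms)
    show "(if 1 \<in> set (snd k) then 0 else drop_degenerate (key_diff k)) = drop_degenerate (key_diff k)"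
      using drop_degenerate_key_diff_unit[OF l, of "fst k"] by simp
  qed
  finally show ?thesis by (simp add: normal_diff_alt)
qed

lemma bar_diff_carrier:
  assumes "r \<in> carrier (bfree (Suc n) x)" shows "bar_diff r \<in> carrier (bfree n x)"
  unfolding bar_diff_def bfree_def carrier_free_Abelian_group_iff
proof (rule keys_frag_extend_sub)
  fix w assume "w \<in> Poly_Mapping.keys r"
  then have "w \<in> bwords (Suc n) x" using assms by (auto simp: bfree_def)
  then show "Poly_Mapping.keys (bar_diff_word w) \<subseteq> bwords n x"
    using bar_diff_word_carrier by (simp add: bfree_def)
qed

lemma bar_diff_0:
  assumes "r \<in> carrier (bfree (Suc 0) x)" shows "bar_diff r = 0"
  unfolding bar_diff_def
proof (rule frag_extend_eq_0)
  fix w assume "w \<in> Poly_Mapping.keys r"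
  then have "w \<in> bwords (Suc 0) x" using assms by (auto simp: bfree_def)
  then show "bar_diff_word w = 0" by (rule bar_diff_word_0)
qed

lemma normal_form_bar_diff:
  assumes r: "r \<in> carrier (bfree (Suc n) x)" and n: "1 \<le> n"
  shows "normal_form x (bar_diff r) = normal_diff (normal_form x r)"
proof -
  have "normal_form x (bar_diff r) = frag_extend (\<lambda>w. normal_form x (bar_diff_word w)) r"
    by (simp add: normal_form_def bar_diff_def frag_extend_extend)
  also have "\<dots> = frag_extend (\<lambda>w. normal_diff (normal_word x w)) r"
  proof (intro frag_extend_eq)
    fix w assume "w \<in> Poly_Mapping.keys r"
    then have w: "w \<in> bwords (Suc n) x" using r by (auto simp: bfree_def)
    then have ne: "w \<noteq> []" and len: "length w = Suc n" by (auto simp: bwords_def)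
    have lk: "2 \<le> length (snd k)" if "k \<in> Poly_Mapping.keys (expand_letters (map snd w))" for k
      using keys_expand_letters_length[of "map snd w"] that len n by auto
    have "normal_form x (bar_diff_word w) = normal_diff (expand_letters (map snd w))"
      using normal_form_bar_diff_word[OF w n] by (simp add: normal_diff_def)
    also have "\<dots> = normal_diff (drop_degenerate (expand_letters (map snd w)))" using normal_diff_drop_degenerate[of "expand_letters (map snd w)"] lk by simp
    also have "\<dots> = normal_diff (normal_word x w)" using ne by (simp add: normal_word_def)
    finally show "normal_form x (bar_diff_word w) = normal_diff (normal_word x w)" .
  qed
  also have "\<dots> = normal_diff (normal_form x r)" by (simp add: normal_form_def normal_diff_extend)
  finally show ?thesis .
qed

lemma BZM_diff_class:
  assumes r: "r \<in> carrier (bfree (Suc n) x)"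
  shows "BZM_diff (Suc n) x (bclass (Suc n) x r) = bclass n x (bar_diff r)"
proof -
  let ?s = "SOME s. s \<in> bclass (Suc n) x r"
  have s: "?s \<in> carrier (bfree (Suc n) x)" "normal_form x ?s = normal_form x r" using bclass_some_rep[OF r] by auto
  have "bclass n x (bar_diff ?s) = bclass n x (bar_diff r)"
  proof (cases "n = 0")
    case True
    have a: "?s \<in> carrier (bfree (Suc 0) x)" "r \<in> carrier (bfree (Suc 0) x)" using True s(1) r by simp_all
    show ?thesis using bar_diff_0[OF a(1)] bar_diff_0[OF a(2)] by simp
  next
    case False
    then show ?thesis using bar_diff_carrier[OF s(1)] bar_diff_carrier[OF r] s(2)
      by (simp add: bclass_eq_iff normal_form_bar_diff[OF s(1)] normal_form_bar_diff[OF r])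
  qed
  then show ?thesis by (simp add: BZM_diff_def bar_diff_def)
qed

lemma BZM_diff_carrier:
  assumes "c \<in> carrier (BZM (Suc n) x)" shows "BZM_diff (Suc n) x c \<in> carrier (BZM n x)"
proof -
  obtain r where r: "r \<in> carrier (bfree (Suc n) x)" "c = bclass (Suc n) x r" using assms by (auto simp: carrier_BZM)
  show ?thesis using BZM_diff_class[OF r(1)] bclass_carrier[OF bar_diff_carrier[OF r(1)]] r(2) by simp
qed

lemma bar_diff_add: "bar_diff (r + s) = bar_diff r + bar_diff s"
  by (simp add: bar_diff_def frag_extend_add)

lemma BZM_diff_mult:
  assumes "c1 \<in> carrier (BZM (Suc n) x)" "c2 \<in> carrier (BZM (Suc n) x)"
  shows "BZM_diff (Suc n) x (c1 \<otimes>\<^bsub>BZM (Suc n) x\<^esub> c2) = BZM_diff (Suc n) x c1 \<otimes>\<^bsub>BZM n x\<^esub> BZM_diff (Suc n) x c2"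
proof -
  obtain r1 where r1: "r1 \<in> carrier (bfree (Suc n) x)" "c1 = bclass (Suc n) x r1" using assms(1) by (auto simp: carrier_BZM)
  obtain r2 where r2: "r2 \<in> carrier (bfree (Suc n) x)" "c2 = bclass (Suc n) x r2" using assms(2) by (auto simp: carrier_BZM)
  have "c1 \<otimes>\<^bsub>BZM (Suc n) x\<^esub> c2 = bclass (Suc n) x (r1 + r2)" using r1 r2 mult_BZM by simp
  then show ?thesis using r1 r2 BZM_diff_class[OF r1(1)] BZM_diff_class[OF r2(1)]
      BZM_diff_class[OF bfree_add[OF r1(1) r2(1)]]
      mult_BZM[OF bar_diff_carrier[OF r1(1)] bar_diff_carrier[OF r2(1)]]
    by (simp add: bar_diff_add)
qed

lemma shift_keys_of: "shift_keys y (frag_of k) = frag_of (y * fst k, snd k)"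
  by (simp add: shift_keys_def)

lemma shift_keys_add: "shift_keys y (a + b) = shift_keys y a + shift_keys y b"
  by (simp add: shift_keys_def frag_extend_add)

lemma shift_keys_cmul: "shift_keys y (frag_cmul c a) = frag_cmul c (shift_keys y a)"
  by (simp add: shift_keys_def frag_extend_cmul)

lemma shift_keys_0 [simp]: "shift_keys y 0 = 0" by (simp add: shift_keys_def)

lemma shift_keys_sum: "shift_keys y (sum f I) = (\<Sum>i\<in>I. shift_keys y (f i))"
  by (induction I rule: infinite_finite_induct) (auto simp: shift_keys_add)

lemma key_diff_shift_keys: "key_diff (y * fst k, snd k) = shift_keys y (key_diff k)"
  by (simp add: key_diff_def face_first_def face_merge_def face_last_def shift_keys_add shift_keys_cmul shift_keys_sum shift_keys_of mult.assoc)

lemma normal_diff_shift_keys: "normal_diff (shift_keys y Q) = shift_keys y (normal_diff Q)"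
proof -
  have "normal_diff (shift_keys y Q) = frag_extend (\<lambda>k. drop_degenerate (key_diff (y * fst k, snd k))) Q"
    by (simp add: normal_diff_alt shift_keys_def frag_extend_extend)
  also have "\<dots> = frag_extend (\<lambda>k. shift_keys y (drop_degenerate (key_diff k))) Q"
    by (simp add: key_diff_shift_keys drop_degenerate_shift_keys)
  also have "\<dots> = shift_keys y (normal_diff Q)" by (simp add: normal_diff_alt shift_keys_def frag_extend_extend)
  finally show ?thesis .
qed

lemma chain_act_0 [simp]: "chain_act y 0 = 0" by (simp add: chain_act_def)

lemma BZM_diff_act:
  assumes c: "c \<in> carrier (BZM (Suc n) x)"
  shows "BZM_diff (Suc n) (x * y) (BZM_act (Suc n) x y c) = BZM_act n x y (BZM_diff (Suc n) x c)"
proof -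
  obtain r where r: "r \<in> carrier (bfree (Suc n) x)" "c = bclass (Suc n) x r" using c by (auto simp: carrier_BZM)
  have ar: "chain_act y r \<in> carrier (bfree (Suc n) (x * y))" by (rule chain_act_carrier[OF r(1)])
  have L: "BZM_diff (Suc n) (x * y) (BZM_act (Suc n) x y c) = bclass n (x * y) (bar_diff (chain_act y r))"
    using r BZM_act_class[OF r(1)] BZM_diff_class[OF ar] by simp
  have R: "BZM_act n x y (BZM_diff (Suc n) x c) = bclass n (x * y) (chain_act y (bar_diff r))"
    using r BZM_diff_class[OF r(1)] BZM_act_class[OF bar_diff_carrier[OF r(1)]] by simp
  have "bclass n (x * y) (bar_diff (chain_act y r)) = bclass n (x * y) (chain_act y (bar_diff r))"
  proof (cases "n = 0")
    case True
    have a: "chain_act y r \<in> carrier (bfree (Suc 0) (x * y))" "r \<in> carrier (bfree (Suc 0) x)" using True ar r(1) by simp_all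
    show ?thesis using bar_diff_0[OF a(1)] bar_diff_0[OF a(2)] by simp
  next
    case False
    have "normal_form (x * y) (bar_diff (chain_act y r)) = normal_form (x * y) (chain_act y (bar_diff r))"
      using False by (simp add: normal_form_bar_diff[OF ar] normal_form_bar_diff[OF r(1)] normal_form_chain_act normal_diff_shift_keys)
    then show ?thesis
      using bar_diff_carrier[OF ar] chain_act_carrier[OF bar_diff_carrier[OF r(1)]] by (simp add: bclass_eq_iff)
  qed
  then show ?thesis using L R by simp
qed

section \<open>Chain isomorphisms induce isomorphisms in cohomology\<close>

lemma r_coset_carrier_update: "H #>\<^bsub>G\<lparr>carrier := K\<rparr>\<^esub> a = H #>\<^bsub>G\<^esub> a"
  by (simp add: r_coset_def)

lemma set_mult_carrier_update: "H <#>\<^bsub>G\<lparr>carrier := K\<rparr>\<^esub> J = H <#>\<^bsub>G\<^esub> J"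
  by (simp add: set_mult_def)

lemma image_r_coset:
  assumes "H \<subseteq> carrier G" "a \<in> carrier G"
    "\<And>x y. x \<in> carrier G \<Longrightarrow> y \<in> carrier G \<Longrightarrow> F (x \<otimes>\<^bsub>G\<^esub> y) = F x \<otimes>\<^bsub>G'\<^esub> F y"
  shows "F ` (H #>\<^bsub>G\<^esub> a) = (F ` H) #>\<^bsub>G'\<^esub> (F a)"
proof -
  have "F ` (H #>\<^bsub>G\<^esub> a) = (\<Union>h\<in>H. {F (h \<otimes>\<^bsub>G\<^esub> a)})" unfolding r_coset_def by blast
  also have "\<dots> = (\<Union>h\<in>H. {F h \<otimes>\<^bsub>G'\<^esub> F a})"
  proof (intro SUP_cong refl)
    fix h assume "h \<in> H"
    then show "{F (h \<otimes>\<^bsub>G\<^esub> a)} = {F h \<otimes>\<^bsub>G'\<^esub> F a}" using assms by auto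
  qed
  also have "\<dots> = (F ` H) #>\<^bsub>G'\<^esub> (F a)" unfolding r_coset_def by blast
  finally show ?thesis .
qed

lemma image_set_mult:
  assumes "H \<subseteq> carrier G" "J \<subseteq> carrier G"
    "\<And>x y. x \<in> carrier G \<Longrightarrow> y \<in> carrier G \<Longrightarrow> F (x \<otimes>\<^bsub>G\<^esub> y) = F x \<otimes>\<^bsub>G'\<^esub> F y"
  shows "F ` (H <#>\<^bsub>G\<^esub> J) = (F ` H) <#>\<^bsub>G'\<^esub> (F ` J)"
proof -
  have "F ` (H <#>\<^bsub>G\<^esub> J) = (\<Union>h\<in>H. \<Union>k\<in>J. {F (h \<otimes>\<^bsub>G\<^esub> k)})" unfolding set_mult_def by blast
  also have "\<dots> = (\<Union>h\<in>H. \<Union>k\<in>J. {F h \<otimes>\<^bsub>G'\<^esub> F k})" using assms by (intro SUP_cong refl) blast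
  also have "\<dots> = (F ` H) <#>\<^bsub>G'\<^esub> (F ` J)" unfolding set_mult_def by blast
  finally show ?thesis .
qed

lemma iso_FactGroup_image:
  assumes inj: "inj_on F (carrier G)"
    and hom: "\<And>x y. x \<in> carrier G \<Longrightarrow> y \<in> carrier G \<Longrightarrow> F (x \<otimes>\<^bsub>G\<^esub> y) = F x \<otimes>\<^bsub>G'\<^esub> F y"
    and closed: "\<And>x y. x \<in> carrier G \<Longrightarrow> y \<in> carrier G \<Longrightarrow> x \<otimes>\<^bsub>G\<^esub> y \<in> carrier G"
    and K: "K \<subseteq> carrier G" and I: "I \<subseteq> carrier G"
    and FK: "F ` K = K'" and FI: "F ` I = I'"
  shows "(\<lambda>C. F ` C) \<in> iso (G\<lparr>carrier := K\<rparr> Mod I) (G'\<lparr>carrier := K'\<rparr> Mod I')"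
proof -
  let ?R = "G\<lparr>carrier := K\<rparr> Mod I" and ?R' = "G'\<lparr>carrier := K'\<rparr> Mod I'"
  have coset_carrier: "I #>\<^bsub>G\<^esub> a \<subseteq> carrier G" if "a \<in> K" for a
    using I K that closed unfolding r_coset_def by blast
  have carR: "carrier ?R = (\<lambda>a. I #>\<^bsub>G\<^esub> a) ` K"
    by (simp add: carrier_FactGroup r_coset_carrier_update)
  have carR': "carrier ?R' = (\<lambda>a. I' #>\<^bsub>G'\<^esub> a) ` K'"
    by (simp add: carrier_FactGroup r_coset_carrier_update)
  have image_coset: "F ` (I #>\<^bsub>G\<^esub> a) = I' #>\<^bsub>G'\<^esub> F a" if "a \<in> K" for a
    using image_r_coset[OF I _ hom, of a] that K FI by auto
  have "(\<lambda>C. F ` C) \<in> hom ?R ?R'"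
  proof (rule homI)
    fix C assume "C \<in> carrier ?R"
    then show "F ` C \<in> carrier ?R'" using carR carR' image_coset FK by auto
  next
    fix C1 C2 assume "C1 \<in> carrier ?R" "C2 \<in> carrier ?R"
    then have "C1 \<subseteq> carrier G" "C2 \<subseteq> carrier G" using carR coset_carrier by auto
    then show "F ` (C1 \<otimes>\<^bsub>?R\<^esub> C2) = F ` C1 \<otimes>\<^bsub>?R'\<^esub> F ` C2"
      using image_set_mult[OF _ _ hom] by (simp add: set_mult_carrier_update)
  qed
  moreover have "bij_betw (\<lambda>C. F ` C) (carrier ?R) (carrier ?R')"
  proof (rule bij_betw_imageI)
    show "inj_on (\<lambda>C. F ` C) (carrier ?R)"
      using inj carR coset_carrier by (auto intro!: inj_onI simp: inj_on_image_eq_iff)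
    have "(\<lambda>C. F ` C) ` carrier ?R = (\<lambda>a. I' #>\<^bsub>G'\<^esub> F a) ` K"
      unfolding carR image_image using image_coset by (intro image_cong) auto
    moreover have "(\<lambda>a. I' #>\<^bsub>G'\<^esub> a) ` K' = (\<lambda>a. I' #>\<^bsub>G'\<^esub> F a) ` K"
      unfolding FK[symmetric] image_image ..
    ultimately show "(\<lambda>C. F ` C) ` carrier ?R = carrier ?R'" using carR' by simp
  qed
  ultimately show ?thesis by (simp add: iso_def)
qed

lemma image_kernel_chain_bij:
  assumes bij: "bij_betw (F n) (carrier (G n)) (carrier (G' n))"
    and inj: "inj_on (F (Suc n)) (carrier (G (Suc n)))"
    and chain: "\<And>x. x \<in> carrier (G n) \<Longrightarrow> F (Suc n) (d n x) = d' n (F n x)"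
    and dcar: "\<And>x. x \<in> carrier (G n) \<Longrightarrow> d n x \<in> carrier (G (Suc n))"
    and one: "\<one>\<^bsub>G (Suc n)\<^esub> \<in> carrier (G (Suc n))" "F (Suc n) \<one>\<^bsub>G (Suc n)\<^esub> = \<one>\<^bsub>G' (Suc n)\<^esub>"
  shows "F n ` kernel (G n) (G (Suc n)) (d n) = kernel (G' n) (G' (Suc n)) (d' n)"
proof -
  have "d n x = \<one>\<^bsub>G (Suc n)\<^esub> \<longleftrightarrow> d' n (F n x) = \<one>\<^bsub>G' (Suc n)\<^esub>" if "x \<in> carrier (G n)" for x
    using inj_on_eq_iff[OF inj dcar[OF that] one(1)] chain[OF that] one(2) by simp
  then have "kernel (G n) (G (Suc n)) (d n) = {x \<in> carrier (G n). d' n (F n x) = \<one>\<^bsub>G' (Suc n)\<^esub>}"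
    by (auto simp: kernel_def)
  moreover have "F n ` {x \<in> carrier (G n). d' n (F n x) = \<one>\<^bsub>G' (Suc n)\<^esub>}
                  = {y \<in> F n ` carrier (G n). d' n y = \<one>\<^bsub>G' (Suc n)\<^esub>}"
    by blast
  ultimately show ?thesis
    using bij by (simp add: kernel_def bij_betw_def)
qed

lemma image_boundaries_chain_bij:
  assumes "F k ` carrier (G k) = carrier (G' k)"
    and "\<And>x. x \<in> carrier (G k) \<Longrightarrow> F (Suc k) (d k x) = d' k (F k x)"
  shows "F (Suc k) ` d k ` carrier (G k) = d' k ` carrier (G' k)"
  using assms by (auto simp: image_image simp flip: assms(1) cong: image_cong)

lemma cohomology_iso_chain_bij:
  fixes G :: "nat \<Rightarrow> 'g monoid" and G' :: "nat \<Rightarrow> 'h monoid"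
  assumes bij: "\<And>k. bij_betw (F k) (carrier (G k)) (carrier (G' k))"
    and hom: "\<And>x y. x \<in> carrier (G n) \<Longrightarrow> y \<in> carrier (G n) \<Longrightarrow> F n (x \<otimes>\<^bsub>G n\<^esub> y) = F n x \<otimes>\<^bsub>G' n\<^esub> F n y"
    and closed: "\<And>x y. x \<in> carrier (G n) \<Longrightarrow> y \<in> carrier (G n) \<Longrightarrow> x \<otimes>\<^bsub>G n\<^esub> y \<in> carrier (G n)"
    and chain: "\<And>k x. x \<in> carrier (G k) \<Longrightarrow> F (Suc k) (d k x) = d' k (F k x)"
    and dcar: "\<And>k x. x \<in> carrier (G k) \<Longrightarrow> d k x \<in> carrier (G (Suc k))"
    and one: "\<And>k. \<one>\<^bsub>G k\<^esub> \<in> carrier (G k)" "\<And>k. F k (\<one>\<^bsub>G k\<^esub>) = \<one>\<^bsub>G' k\<^esub>"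
  shows "cohomology G d n \<cong> cohomology G' d' n"
proof -
  define I where "I = (if n = 0 then {\<one>\<^bsub>G 0\<^esub>} else d (n - 1) ` carrier (G (n - 1)))"
  define I' where "I' = (if n = 0 then {\<one>\<^bsub>G' 0\<^esub>} else d' (n - 1) ` carrier (G' (n - 1)))"
  have I: "I \<subseteq> carrier (G n)"
    using one(1)[of 0] dcar[of _ "n - 1"] by (cases n) (auto simp: I_def)
  have FI: "F n ` I = I'"
    using one(2)[of 0] image_boundaries_chain_bij[of F "n - 1" G G' d d'] bij chain
    by (cases n) (auto simp: I_def I'_def bij_betw_def)
  have "(\<lambda>C. F n ` C) \<in> iso ((G n)\<lparr>carrier := kernel (G n) (G (Suc n)) (d n)\<rparr> Mod I)
                                 ((G' n)\<lparr>carrier := kernel (G' n) (G' (Suc n)) (d' n)\<rparr> Mod I')"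
    using bij[of n] bij[of "Suc n"] chain dcar one
    by (intro iso_FactGroup_image[OF _ hom closed _ I _ FI] image_kernel_chain_bij)
       (auto simp: bij_betw_def kernel_def)
  then show ?thesis
    unfolding cohomology_def I_def[symmetric] I'_def[symmetric] by (rule is_isoI)
qed

text \<open>
  The inverse of restriction gives the normal key (u, [v_1, ..., v_n]) the value u_* f(v_1, ..., v_n)
  and evaluates the linear extension on the normal form of a representative, which depends only on
  the class.
\<close>

definition std_cochain :: "nat \<Rightarrow> ('m::comm_monoid_mult \<Rightarrow> ('m bword \<Rightarrow>\<^sub>0 int) set \<Rightarrow> 'a) \<Rightarrow> ('m list \<Rightarrow> 'a)" where
  "std_cochain n \<phi> = (\<lambda>xs. if length xs = n then \<phi> (prod_list xs) (bclass n (prod_list xs) (frag_of (std_word xs))) else undefined)"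

definition key_value :: "('m::comm_monoid_mult \<Rightarrow> 'm \<Rightarrow> 'a \<Rightarrow> 'a) \<Rightarrow> ('m list \<Rightarrow> 'a) \<Rightarrow> ('m \<times> 'm list) \<Rightarrow> 'a" where
  "key_value act f k = act (prod_list (snd k)) (fst k) (f (snd k))"

definition key_value_hom :: "('m::comm_monoid_mult \<Rightarrow> 'a monoid) \<Rightarrow> ('m \<Rightarrow> 'm \<Rightarrow> 'a \<Rightarrow> 'a) \<Rightarrow> nat \<Rightarrow> ('m list \<Rightarrow> 'a) \<Rightarrow> 'm
                   \<Rightarrow> (('m \<times> 'm list) \<Rightarrow>\<^sub>0 int) \<Rightarrow> 'a" where
  "key_value_hom A act n f x = (SOME h. h \<in> hom (free_Abelian_group (normal_keys n x)) (A x) \<and>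
                                         (\<forall>k\<in>normal_keys n x. h (frag_of k) = key_value act f k))"

definition cochain_hom :: "('m::comm_monoid_mult \<Rightarrow> 'a monoid) \<Rightarrow> ('m \<Rightarrow> 'm \<Rightarrow> 'a \<Rightarrow> 'a) \<Rightarrow> nat \<Rightarrow> ('m list \<Rightarrow> 'a)
                   \<Rightarrow> ('m \<Rightarrow> ('m bword \<Rightarrow>\<^sub>0 int) set \<Rightarrow> 'a)" where
  "cochain_hom A act n f = (\<lambda>x c. if c \<in> carrier (BZM n x) then key_value_hom A act n f x (normal_form x (SOME r. r \<in> c)) else undefined)"

lemma std_word_bwords: "length xs = n \<Longrightarrow> std_word xs \<in> bwords n (prod_list xs)"
  using std_word_carrier[of xs] by (simp add: bwords_def)

lemma bclass_std_word_carrier: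
  "length xs = n \<Longrightarrow> bclass n (prod_list xs) (frag_of (std_word xs)) \<in> carrier (BZM n (prod_list xs))"
  by (rule bclass_carrier[OF bfree_of[OF std_word_bwords]])

lemma normal_word_std_word: "normal_word (prod_list xs) (std_word xs) = drop_degenerate (frag_of (1, xs))"
  by (cases "xs = []") (simp_all add: normal_word_def expand_letters_std_word drop_degenerate_of del: expand_letters.simps)

lemma bclass_std_word_unit:
  assumes "length xs = n" "1 \<in> set xs"
  shows "bclass n (prod_list xs) (frag_of (std_word xs)) = \<one>\<^bsub>BZM n (prod_list xs)\<^esub>"
proof -
  have "normal_form (prod_list xs) (frag_of (std_word xs)) = 0"
    using assms by (simp add: normal_word_std_word drop_degenerate_of)
  moreover have "0 \<in> carrier (bfree n (prod_list xs))" by (simp add: bfree_def)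
  ultimately show ?thesis unfolding one_BZM
    using bclass_eq_iff[OF bfree_of[OF std_word_bwords[OF assms(1)]]] by simp
qed

lemma normal_form_in_free:
  "r \<in> carrier (bfree n x) \<Longrightarrow> normal_form x r \<in> carrier (free_Abelian_group (normal_keys n x))"
  using keys_normal_form by simp

lemma key_word_carrier: "length vs = n \<Longrightarrow> key_word (u, vs) \<in> carrier (bfree n (prod_list vs * u))"
  using chain_act_carrier[OF bfree_of[OF std_word_bwords]] by (simp add: key_word_def chain_act_def)

lemma bclass_hom: "bclass n x \<in> hom (bfree n x) (BZM n x)"
proof (rule homI)
  fix r s assume "r \<in> carrier (bfree n x)" "s \<in> carrier (bfree n x)"
  then show "bclass n x (r \<otimes>\<^bsub>bfree n x\<^esub> s) = bclass n x r \<otimes>\<^bsub>BZM n x\<^esub> bclass n x s"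
    using mult_BZM[symmetric] by (simp add: bfree_def)
qed (rule bclass_carrier)

lemma key_chain_hom: "key_chain \<in> hom (free_Abelian_group (normal_keys n x)) (bfree n x)"
proof (rule homI)
  fix Q assume "Q \<in> carrier (free_Abelian_group (normal_keys n x))"
  then show "key_chain Q \<in> carrier (bfree n x)" by (simp add: key_chain_carrier)
qed (simp add: key_chain_def frag_extend_add bfree_def)

lemma shift_keys_hom: "shift_keys y \<in> hom (free_Abelian_group (normal_keys n x)) (free_Abelian_group (normal_keys n (x * y)))"
proof (rule homI)
  fix Q assume Q: "Q \<in> carrier (free_Abelian_group (normal_keys n x))"
  have "k \<in> normal_keys n (x * y)" if k: "k \<in> Poly_Mapping.keys (shift_keys y Q)" for k
  proof -
    obtain k' where "k' \<in> Poly_Mapping.keys Q" "k = (y * fst k', snd k')" using keys_shift_keys[of y Q] k by blast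
    then show ?thesis using Q by (auto simp: normal_keys_def mult_ac)
  qed
  then show "shift_keys y Q \<in> carrier (free_Abelian_group (normal_keys n (x * y)))" by auto
qed (simp add: shift_keys_add)

lemma hom_bclass_add:
  assumes "group H" "h \<in> hom (BZM n x) H" "r \<in> carrier (bfree n x)" "s \<in> carrier (bfree n x)"
  shows "h (bclass n x (r + s)) = h (bclass n x r) \<otimes>\<^bsub>H\<^esub> h (bclass n x s)"
  using hom_mult[OF hom_compose[OF bclass_hom assms(2)] assms(3,4)] by (simp add: bfree_def)

lemma hom_bclass_cmul:
  assumes "group H" "h \<in> hom (BZM n x) H" "r \<in> carrier (bfree n x)"
  shows "h (bclass n x (frag_cmul k r)) = h (bclass n x r) [^]\<^bsub>H\<^esub> k"
  using hom_int_pow[OF hom_compose[OF bclass_hom assms(2)] assms(3) bfree_group assms(1)] assms(3)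
  by (simp add: bfree_def)

lemma hom_bclass_0:
  assumes "group H" "h \<in> hom (BZM n x) H"
  shows "h (bclass n x 0) = \<one>\<^bsub>H\<^esub>"
  using group_hom.hom_one[of "BZM n x" H h] assms
  by (simp add: group_hom_def group_hom_axioms_def BZM_group one_BZM)

lemma hom_bclass_sum_cmul:
  assumes H: "comm_group H" and h: "h \<in> hom (BZM n x) H"
    and fin: "finite I" and f: "\<And>i. i \<in> I \<Longrightarrow> f i \<in> carrier (bfree n x)"
  shows "h (bclass n x (\<Sum>i\<in>I. frag_cmul (c i) (f i))) = (\<Otimes>\<^bsub>H\<^esub> i\<in>I. h (bclass n x (f i)) [^]\<^bsub>H\<^esub> c i)"
  using fin f
proof (induction I rule: finite_induct)
  interpret H: comm_group H by (rule H)
  case empty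
  show ?case using hom_bclass_0[OF H.is_group h] by simp
next
  interpret H: comm_group H by (rule H)
  case (insert i I)
  have value_carrier: "h (bclass n x (f j)) [^]\<^bsub>H\<^esub> c j \<in> carrier H" if "j \<in> insert i I" for j
    using insert.prems[OF that] hom_in_carrier[OF h bclass_carrier] by blast
  have "(\<Sum>j\<in>I. frag_cmul (c j) (f j)) \<in> carrier (bfree n x)"
    using insert by (intro bfree_sum bfree_cmul) auto
  then show ?case
    using insert value_carrier hom_bclass_add[OF H.is_group h bfree_cmul[OF insert.prems[of i]]]
      hom_bclass_cmul[OF H.is_group h insert.prems[of i]]
    by (simp add: Pi_iff)
qed

lemma bar_diff_word_std_word:
  assumes "xs = v # xs'"
  shows "bar_diff_word (std_word xs) = key_word (v, xs')
           + (\<Sum>i\<in>{1..<length xs}. frag_cmul ((-1) ^ i) (frag_of (std_word (merge_at i xs))))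
           + frag_cmul ((-1) ^ length xs) (key_word (last xs, butlast xs))"
proof -
  have "take (i - 1) (std_word xs) @ [(fst (std_word xs ! (i - 1)) * fst (std_word xs ! i),
          ZM_mult (snd (std_word xs ! (i - 1))) (snd (std_word xs ! i)))] @ drop (Suc i) (std_word xs)
        = std_word (merge_at i xs)" if "i \<in> {1..<length xs}" for i
    using that by (auto simp: std_word_def merge_at_def take_map drop_map)
  then have "(\<Sum>i\<in>{1..<length (std_word xs)}. frag_cmul ((-1) ^ i) (frag_of (take (i - 1) (std_word xs)
          @ [(fst (std_word xs ! (i - 1)) * fst (std_word xs ! i), ZM_mult (snd (std_word xs ! (i - 1))) (snd (std_word xs ! i)))]
          @ drop (Suc i) (std_word xs))))
        = (\<Sum>i\<in>{1..<length xs}. frag_cmul ((-1) ^ i) (frag_of (std_word (merge_at i xs))))"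
    by (intro sum.cong) auto
  moreover have "last (std_word xs) = (last xs, frag_of (1, last xs))" "butlast (std_word xs) = std_word (butlast xs)"
    using assms by (simp_all add: std_word_def last_map map_butlast)
  ultimately show ?thesis
    unfolding bar_diff_word_def using assms by (simp add: key_word_def std_word_Cons)
qed

section \<open>Restriction to normal words is an isomorphism of cochain complexes\<close>

locale hm_module =
  fixes A :: "'m::comm_monoid_mult \<Rightarrow> 'a monoid" and act :: "'m \<Rightarrow> 'm \<Rightarrow> 'a \<Rightarrow> 'a"
  assumes HM: "HM_module A act"
begin

lemma A_comm_group: "comm_group (A x)"
  using HM by (simp add: HM_module_def)

lemma A_group: "group (A x)"
  using A_comm_group[of x] by (simp add: comm_group_def)

lemma act_hom: "act x y \<in> hom (A x) (A (x * y))"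
  using HM by (simp add: HM_module_def)

lemma act_1: "a \<in> carrier (A x) \<Longrightarrow> act x 1 a = a"
  using HM by (simp add: HM_module_def)

lemma act_comp: "a \<in> carrier (A x) \<Longrightarrow> act (x * y) z (act x y a) = act x (y * z) a"
  using HM by (simp add: HM_module_def)

lemma act_closed: "a \<in> carrier (A x) \<Longrightarrow> act x y a \<in> carrier (A (x * y))"
  using act_hom[of x y] by (auto simp: hom_def)

lemma act_mult: "a \<in> carrier (A x) \<Longrightarrow> b \<in> carrier (A x) \<Longrightarrow> act x y (a \<otimes>\<^bsub>A x\<^esub> b) = act x y a \<otimes>\<^bsub>A (x * y)\<^esub> act x y b"
  using act_hom[of x y] by (auto simp: hom_def)

lemma act_one: "act x y \<one>\<^bsub>A x\<^esub> = \<one>\<^bsub>A (x * y)\<^esub>"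
  using group_hom.hom_one[of "A x" "A (x * y)" "act x y"] act_hom A_group
  by (simp add: group_hom_def group_hom_axioms_def)

lemma HomB_carrier_iff:
  "\<phi> \<in> carrier (HomB A act n) \<longleftrightarrow>
     (\<forall>x. \<phi> x \<in> hom (BZM n x) (A x) \<and> \<phi> x \<in> extensional (carrier (BZM n x))) \<and>
     (\<forall>x y c. c \<in> carrier (BZM n x) \<longrightarrow> \<phi> (x * y) (BZM_act n x y c) = act x y (\<phi> x c))"
  by (simp add: HomB_def)

lemma HomB_mult: "\<phi> \<otimes>\<^bsub>HomB A act n\<^esub> \<psi> = (\<lambda>x c. if c \<in> carrier (BZM n x) then \<phi> x c \<otimes>\<^bsub>A x\<^esub> \<psi> x c else undefined)"
  by (simp add: HomB_def)

lemma HomB_one: "\<one>\<^bsub>HomB A act n\<^esub> = (\<lambda>x c. if c \<in> carrier (BZM n x) then \<one>\<^bsub>A x\<^esub> else undefined)"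
  by (simp add: HomB_def)

lemma HomB_one_carrier: "\<one>\<^bsub>HomB A act n\<^esub> \<in> carrier (HomB A act n)"
proof -
  have "(\<lambda>c. if c \<in> carrier (BZM n x) then \<one>\<^bsub>A x\<^esub> else undefined) \<in> hom (BZM n x) (A x)" for x
  proof -
    interpret A: group "A x" by (rule A_group)
    interpret B: group "BZM n x" by (rule BZM_group)
    show ?thesis by (intro homI) auto
  qed
  then show ?thesis by (simp add: HomB_carrier_iff HomB_one BZM_act_carrier act_one extensional_def)
qed

lemma HomB_closed:
  assumes \<phi>: "\<phi> \<in> carrier (HomB A act n)" and \<psi>: "\<psi> \<in> carrier (HomB A act n)"
  shows "\<phi> \<otimes>\<^bsub>HomB A act n\<^esub> \<psi> \<in> carrier (HomB A act n)"
proof -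
  have "(\<lambda>c. if c \<in> carrier (BZM n x) then \<phi> x c \<otimes>\<^bsub>A x\<^esub> \<psi> x c else undefined) \<in> hom (BZM n x) (A x)" for x
  proof -
    interpret A: comm_group "A x" by (rule A_comm_group)
    interpret B: group "BZM n x" by (rule BZM_group)
    have "\<phi> x \<in> hom (BZM n x) (A x)" "\<psi> x \<in> hom (BZM n x) (A x)" using \<phi> \<psi> by (auto simp: HomB_carrier_iff)
    then show ?thesis by (intro homI) (auto simp: hom_in_carrier hom_mult A.m_ac)
  qed
  moreover have "\<phi> (x * y) (BZM_act n x y c) \<otimes>\<^bsub>A (x * y)\<^esub> \<psi> (x * y) (BZM_act n x y c)
      = act x y (\<phi> x c \<otimes>\<^bsub>A x\<^esub> \<psi> x c)" if c: "c \<in> carrier (BZM n x)" for x y c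
  proof -
    have "\<phi> x c \<in> carrier (A x)" "\<psi> x c \<in> carrier (A x)"
      using c \<phi> \<psi> by (auto simp: HomB_carrier_iff intro: hom_in_carrier)
    then show ?thesis using c \<phi> \<psi> by (simp add: HomB_carrier_iff act_mult)
  qed
  ultimately show ?thesis by (simp add: HomB_carrier_iff HomB_mult BZM_act_carrier extensional_def)
qed

lemma HomB_diff_carrier:
  assumes \<phi>: "\<phi> \<in> carrier (HomB A act n)"
  shows "HomB_diff A n \<phi> \<in> carrier (HomB A act (Suc n))"
proof -
  have "HomB_diff A n \<phi> x \<in> hom (BZM (Suc n) x) (A x)" for x
  proof -
    interpret B: group "BZM (Suc n) x" by (rule BZM_group)
    have "\<phi> x \<in> hom (BZM n x) (A x)" using \<phi> by (simp add: HomB_carrier_iff)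
    then show ?thesis
      by (intro homI) (auto simp: HomB_diff_def BZM_diff_carrier BZM_diff_mult hom_in_carrier hom_mult)
  qed
  moreover have "HomB_diff A n \<phi> (x * y) (BZM_act (Suc n) x y c) = act x y (HomB_diff A n \<phi> x c)"
    if "c \<in> carrier (BZM (Suc n) x)" for x y c
    using that \<phi> BZM_diff_carrier[OF that]
    by (simp add: HomB_diff_def BZM_act_carrier BZM_diff_act HomB_carrier_iff)
  ultimately show ?thesis by (simp add: HomB_carrier_iff HomB_diff_def extensional_def)
qed

lemma std_cochain_carrier:
  assumes \<phi>: "\<phi> \<in> carrier (HomB A act n)"
  shows "std_cochain n \<phi> \<in> carrier (Ccoch A n)"
proof -
  have "std_cochain n \<phi> xs \<in> carrier (A (prod_list xs)) \<and> (1 \<in> set xs \<longrightarrow> std_cochain n \<phi> xs = \<one>\<^bsub>A (prod_list xs)\<^esub>)"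
    if l: "length xs = n" for xs
  proof -
    have h: "\<phi> (prod_list xs) \<in> hom (BZM n (prod_list xs)) (A (prod_list xs))" using \<phi> by (simp add: HomB_carrier_iff)
    then have "std_cochain n \<phi> xs \<in> carrier (A (prod_list xs))"
      using bclass_std_word_carrier[OF l] l by (simp add: std_cochain_def hom_in_carrier)
    moreover have "std_cochain n \<phi> xs = \<one>\<^bsub>A (prod_list xs)\<^esub>" if "1 \<in> set xs"
      using bclass_std_word_unit[OF l that] hom_bclass_0[OF A_group h] l by (simp add: std_cochain_def one_BZM)
    ultimately show ?thesis by blast
  qed
  then show ?thesis unfolding Ccoch_def by (simp add: std_cochain_def)
qed

lemma std_cochain_mult:
  assumes "\<phi> \<in> carrier (HomB A act n)" "\<psi> \<in> carrier (HomB A act n)"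
  shows "std_cochain n (\<phi> \<otimes>\<^bsub>HomB A act n\<^esub> \<psi>) = std_cochain n \<phi> \<otimes>\<^bsub>Ccoch A n\<^esub> std_cochain n \<psi>"
  by (rule ext) (simp add: std_cochain_def HomB_mult Ccoch_def bclass_std_word_carrier)

lemma std_cochain_one: "std_cochain n \<one>\<^bsub>HomB A act n\<^esub> = \<one>\<^bsub>Ccoch A n\<^esub>"
  by (rule ext) (simp add: std_cochain_def HomB_one Ccoch_def bclass_std_word_carrier)

lemma HomB_key_word:
  assumes \<phi>: "\<phi> \<in> carrier (HomB A act n)" and l: "length vs = n"
  shows "\<phi> (prod_list vs * u) (bclass n (prod_list vs * u) (key_word (u, vs))) = key_value act (std_cochain n \<phi>) (u, vs)"
proof -
  have g: "frag_of (std_word vs) \<in> carrier (bfree n (prod_list vs))" by (rule bfree_of[OF std_word_bwords[OF l]])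
  have "bclass n (prod_list vs * u) (key_word (u, vs)) = BZM_act n (prod_list vs) u (bclass n (prod_list vs) (frag_of (std_word vs)))"
    using BZM_act_class[OF g] by (simp add: key_word_def chain_act_def)
  then show ?thesis
    using \<phi> bclass_carrier[OF g] l by (simp add: HomB_carrier_iff key_value_def std_cochain_def)
qed

lemma Ccoch_val: "f \<in> carrier (Ccoch A n) \<Longrightarrow> length xs = n \<Longrightarrow> f xs \<in> carrier (A (prod_list xs))"
  by (simp add: Ccoch_def)

lemma key_value_carrier:
  assumes f: "f \<in> carrier (Ccoch A n)" and k: "k \<in> normal_keys n x"
  shows "key_value act f k \<in> carrier (A x)"
proof -
  obtain u vs where k': "k = (u, vs)" "length vs = n" "x = prod_list vs * u"
    using k by (cases k) (auto simp: normal_keys_def mult.commute)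
  then show ?thesis using act_closed Ccoch_val[OF f] by (simp add: key_value_def)
qed

lemma key_value_hom_spec:
  assumes f: "f \<in> carrier (Ccoch A n)"
  shows "key_value_hom A act n f x \<in> hom (free_Abelian_group (normal_keys n x)) (A x)"
    and "k \<in> normal_keys n x \<Longrightarrow> key_value_hom A act n f x (frag_of k) = key_value act f k"
proof -
  have "key_value act f ` normal_keys n x \<subseteq> carrier (A x)" using key_value_carrier[OF f] by blast
  then obtain h where "h \<in> hom (free_Abelian_group (normal_keys n x)) (A x)"
    "\<And>k. k \<in> normal_keys n x \<Longrightarrow> h (frag_of k) = key_value act f k"
    using comm_group.free_Abelian_group_universal[OF A_comm_group] by metis
  then have "\<exists>h. h \<in> hom (free_Abelian_group (normal_keys n x)) (A x) \<and> (\<forall>k\<in>normal_keys n x. h (frag_of k) = key_value act f k)"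
    by blast
  from someI_ex[OF this] show "key_value_hom A act n f x \<in> hom (free_Abelian_group (normal_keys n x)) (A x)"
    and "k \<in> normal_keys n x \<Longrightarrow> key_value_hom A act n f x (frag_of k) = key_value act f k"
    unfolding key_value_hom_def by blast+
qed

lemma cochain_hom_class:
  assumes r: "r \<in> carrier (bfree n x)"
  shows "cochain_hom A act n f x (bclass n x r) = key_value_hom A act n f x (normal_form x r)"
  using bclass_carrier[OF r] bclass_some_rep[OF r] by (simp add: cochain_hom_def)

lemma cochain_hom_hom:
  assumes f: "f \<in> carrier (Ccoch A n)"
  shows "cochain_hom A act n f x \<in> hom (BZM n x) (A x)"
proof (rule homI)
  note h = key_value_hom_spec(1)[OF f]
  fix c assume "c \<in> carrier (BZM n x)"
  then obtain r where "r \<in> carrier (bfree n x)" "c = bclass n x r" by (auto simp: carrier_BZM)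
  then show "cochain_hom A act n f x c \<in> carrier (A x)"
    using cochain_hom_class hom_in_carrier[OF h normal_form_in_free] by simp
next
  note h = key_value_hom_spec(1)[OF f]
  fix c1 c2 assume "c1 \<in> carrier (BZM n x)" "c2 \<in> carrier (BZM n x)"
  then obtain r1 r2 where r: "r1 \<in> carrier (bfree n x)" "c1 = bclass n x r1" "r2 \<in> carrier (bfree n x)" "c2 = bclass n x r2"
    by (auto simp: carrier_BZM)
  then have "cochain_hom A act n f x (c1 \<otimes>\<^bsub>BZM n x\<^esub> c2)
      = key_value_hom A act n f x (normal_form x r1 \<otimes>\<^bsub>free_Abelian_group (normal_keys n x)\<^esub> normal_form x r2)"
    using mult_BZM[OF r(1,3)] cochain_hom_class[OF bfree_add[OF r(1,3)]] by (simp add: normal_form_add)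
  then show "cochain_hom A act n f x (c1 \<otimes>\<^bsub>BZM n x\<^esub> c2) = cochain_hom A act n f x c1 \<otimes>\<^bsub>A x\<^esub> cochain_hom A act n f x c2"
    using r hom_mult[OF h normal_form_in_free normal_form_in_free] cochain_hom_class by simp
qed

lemma cochain_hom_natural:
  assumes f: "f \<in> carrier (Ccoch A n)" and c: "c \<in> carrier (BZM n x)"
  shows "cochain_hom A act n f (x * y) (BZM_act n x y c) = act x y (cochain_hom A act n f x c)"
proof -
  obtain r where r: "r \<in> carrier (bfree n x)" "c = bclass n x r" using c by (auto simp: carrier_BZM)
  have "key_value_hom A act n f (x * y) (shift_keys y (frag_of k)) = act x y (key_value_hom A act n f x (frag_of k))"
    if k: "k \<in> normal_keys n x" for k
  proof -
    obtain u vs where k': "k = (u, vs)" "length vs = n" "x = prod_list vs * u"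
      using k by (cases k) (auto simp: normal_keys_def mult.commute)
    then have "(y * u, vs) \<in> normal_keys n (x * y)" using k by (auto simp: normal_keys_def mult_ac)
    then show ?thesis
      using k k' key_value_hom_spec(2)[OF f] act_comp[OF Ccoch_val[OF f k'(2)], of u y]
      by (simp add: shift_keys_def key_value_def mult.commute)
  qed
  then have "(key_value_hom A act n f (x * y) \<circ> shift_keys y) (normal_form x r)
      = (act x y \<circ> key_value_hom A act n f x) (normal_form x r)"
    by (intro free_Abelian_group_hom_eq[OF A_group hom_compose[OF shift_keys_hom key_value_hom_spec(1)[OF f]]
        hom_compose[OF key_value_hom_spec(1)[OF f] act_hom] _ keys_normal_form[OF r(1)]]) simp
  then show ?thesis
    using r BZM_act_class[OF r(1)] cochain_hom_class[OF r(1)] cochain_hom_class[OF chain_act_carrier[OF r(1)]]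
    by (simp add: normal_form_chain_act)
qed

lemma cochain_hom_carrier:
  assumes f: "f \<in> carrier (Ccoch A n)"
  shows "cochain_hom A act n f \<in> carrier (HomB A act n)"
  using cochain_hom_hom[OF f] cochain_hom_natural[OF f]
  by (simp add: HomB_carrier_iff cochain_hom_def extensional_def)

lemma std_cochain_cochain_hom:
  assumes f: "f \<in> carrier (Ccoch A n)"
  shows "std_cochain n (cochain_hom A act n f) = f"
proof (rule ext)
  fix xs :: "'m list"
  show "std_cochain n (cochain_hom A act n f) xs = f xs"
  proof (cases "length xs = n")
    case False then show ?thesis using f by (simp add: std_cochain_def Ccoch_def)
  next
    case l: True
    have "std_cochain n (cochain_hom A act n f) xs = key_value_hom A act n f (prod_list xs) (drop_degenerate (frag_of (1, xs)))"
      using l cochain_hom_class[OF bfree_of[OF std_word_bwords[OF l]]] by (simp add: std_cochain_def normal_word_std_word)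
    also have "\<dots> = f xs"
    proof (cases "1 \<in> set xs")
      case True
      then show ?thesis
        using f l hom_zero_free_Abelian_group[OF A_group key_value_hom_spec(1)[OF f]] by (simp add: drop_degenerate_of Ccoch_def)
    next
      case False
      then have "(1, xs) \<in> normal_keys n (prod_list xs)" using l by (simp add: normal_keys_def)
      then show ?thesis
        using False key_value_hom_spec(2)[OF f] act_1[OF Ccoch_val[OF f l]] by (simp add: drop_degenerate_of key_value_def)
    qed
    finally show ?thesis .
  qed
qed

lemma cochain_hom_std_cochain:
  assumes \<phi>: "\<phi> \<in> carrier (HomB A act n)"
  shows "cochain_hom A act n (std_cochain n \<phi>) = \<phi>"
proof (intro ext)
  fix x :: 'm and c
  have f: "std_cochain n \<phi> \<in> carrier (Ccoch A n)" by (rule std_cochain_carrier[OF \<phi>])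
  have h: "\<phi> x \<in> hom (BZM n x) (A x)" "\<phi> x \<in> extensional (carrier (BZM n x))"
    using \<phi> by (auto simp: HomB_carrier_iff)
  show "cochain_hom A act n (std_cochain n \<phi>) x c = \<phi> x c"
  proof (cases "c \<in> carrier (BZM n x)")
    case False then show ?thesis using h(2) by (simp add: cochain_hom_def extensional_def)
  next
    case True
    then obtain r where r: "r \<in> carrier (bfree n x)" "c = bclass n x r" by (auto simp: carrier_BZM)
    have keys: "Poly_Mapping.keys (normal_form x r) \<subseteq> normal_keys n x" by (rule keys_normal_form[OF r(1)])
    have c_normal: "c = bclass n x (key_chain (normal_form x r))"
      using r bclass_eq_iff[OF r(1) key_chain_carrier[OF keys]] normal_form_key_chain[OF keys] by simp
    have "key_value_hom A act n (std_cochain n \<phi>) x (frag_of k) = \<phi> x (bclass n x (key_chain (frag_of k)))"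
      if k: "k \<in> normal_keys n x" for k
    proof -
      obtain u vs where k': "k = (u, vs)" "length vs = n" "x = prod_list vs * u"
        using k by (cases k) (auto simp: normal_keys_def mult.commute)
      then show ?thesis
        using k key_value_hom_spec(2)[OF f] HomB_key_word[OF \<phi> k'(2)] by (simp add: key_chain_def)
    qed
    then have "key_value_hom A act n (std_cochain n \<phi>) x (normal_form x r)
        = (\<phi> x \<circ> bclass n x \<circ> key_chain) (normal_form x r)"
      by (intro free_Abelian_group_hom_eq[OF A_group key_value_hom_spec(1)[OF f]
          hom_compose[OF key_chain_hom hom_compose[OF bclass_hom h(1)]] _ keys]) simp
    then show ?thesis using r c_normal cochain_hom_class[OF r(1)] by simp
  qed
qed

lemma std_cochain_bij: "bij_betw (std_cochain n) (carrier (HomB A act n)) (carrier (Ccoch A n))"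
  using std_cochain_carrier cochain_hom_carrier cochain_hom_std_cochain std_cochain_cochain_hom
  by (intro bij_betwI[where g = "cochain_hom A act n"]) auto

lemma HomB_merge_faces:
  assumes \<phi>: "\<phi> \<in> carrier (HomB A act n)" and l: "length xs = Suc n"
  defines "P \<equiv> prod_list xs"
  shows "(\<Sum>i\<in>{1..<Suc n}. frag_cmul ((-1) ^ i) (frag_of (std_word (merge_at i xs)))) \<in> carrier (bfree n P)"
    and "\<phi> P (bclass n P (\<Sum>i\<in>{1..<Suc n}. frag_cmul ((-1) ^ i) (frag_of (std_word (merge_at i xs)))))
           = (\<Otimes>\<^bsub>A P\<^esub> i\<in>{1..n}. std_cochain n \<phi> (merge_at i xs) [^]\<^bsub>A P\<^esub> ((-1::int) ^ i))"
proof -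
  interpret AP: comm_group "A P" by (rule A_comm_group)
  have merge_carrier: "frag_of (std_word (merge_at i xs)) \<in> carrier (bfree n P)" if "i \<in> {1..<Suc n}" for i
    using std_word_bwords[of "merge_at i xs" n] that l length_merge_at[of i xs] prod_merge_at[of i xs]
    by (simp add: P_def bfree_of)
  then show "(\<Sum>i\<in>{1..<Suc n}. frag_cmul ((-1) ^ i) (frag_of (std_word (merge_at i xs)))) \<in> carrier (bfree n P)"
    by (intro bfree_sum bfree_cmul) auto
  have merge_value: "\<phi> P (bclass n P (frag_of (std_word (merge_at i xs)))) = std_cochain n \<phi> (merge_at i xs)"
    and merge_value_carrier: "std_cochain n \<phi> (merge_at i xs) \<in> carrier (A P)" if "i \<in> {1..<Suc n}" for i
    using that l length_merge_at[of i xs] prod_merge_at[of i xs] Ccoch_val[OF std_cochain_carrier[OF \<phi>], of "merge_at i xs"]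
    by (simp_all add: std_cochain_def P_def)
  have "\<phi> P \<in> hom (BZM n P) (A P)" using \<phi> by (simp add: HomB_carrier_iff)
  then have "\<phi> P (bclass n P (\<Sum>i\<in>{1..<Suc n}. frag_cmul ((-1) ^ i) (frag_of (std_word (merge_at i xs)))))
      = (\<Otimes>\<^bsub>A P\<^esub> i\<in>{1..<Suc n}. \<phi> P (bclass n P (frag_of (std_word (merge_at i xs)))) [^]\<^bsub>A P\<^esub> ((-1::int) ^ i))"
    by (rule hom_bclass_sum_cmul[OF A_comm_group _ finite_atLeastLessThan merge_carrier])
  also have "\<dots> = (\<Otimes>\<^bsub>A P\<^esub> i\<in>{1..n}. std_cochain n \<phi> (merge_at i xs) [^]\<^bsub>A P\<^esub> ((-1::int) ^ i))"
    using merge_value merge_value_carrier by (intro AP.finprod_cong') auto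
  finally show "\<phi> P (bclass n P (\<Sum>i\<in>{1..<Suc n}. frag_cmul ((-1) ^ i) (frag_of (std_word (merge_at i xs)))))
      = (\<Otimes>\<^bsub>A P\<^esub> i\<in>{1..n}. std_cochain n \<phi> (merge_at i xs) [^]\<^bsub>A P\<^esub> ((-1::int) ^ i))" .
qed

lemma HomB_bar_diff_std_word:
  assumes \<phi>: "\<phi> \<in> carrier (HomB A act n)" and l: "length xs = Suc n" and n: "n \<noteq> 0"
  shows "\<phi> (prod_list xs) (bclass n (prod_list xs) (bar_diff_word (std_word xs))) = Cdiff A act n (std_cochain n \<phi>) xs"
proof -
  define P where "P = prod_list xs"
  have h: "\<phi> P \<in> hom (BZM n P) (A P)" using \<phi> by (simp add: HomB_carrier_iff)
  obtain v xs' where xs: "xs = v # xs'" using l by (cases xs) auto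
  have ne: "xs \<noteq> []" and lxs': "length xs' = n" and lbl: "length (butlast xs) = n" using xs l by auto
  have P_first: "P = prod_list xs' * v" using xs by (simp add: P_def mult.commute)
  have P_last: "P = prod_list (butlast xs) * last xs"
    using append_butlast_last_id[OF ne] by (metis P_def prod_list.append prod_list.Cons prod_list.Nil mult_1_right)
  have first: "key_word (v, xs') \<in> carrier (bfree n P)"
    using key_word_carrier[OF lxs', of v] P_first by simp
  have last: "key_word (last xs, butlast xs) \<in> carrier (bfree n P)"
    using key_word_carrier[OF lbl, of "last xs"] P_last by simp
  have "\<phi> P (bclass n P (bar_diff_word (std_word xs)))
      = \<phi> P (bclass n P (key_word (v, xs')))
        \<otimes>\<^bsub>A P\<^esub> \<phi> P (bclass n P (\<Sum>i\<in>{1..<Suc n}. frag_cmul ((-1) ^ i) (frag_of (std_word (merge_at i xs)))))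
        \<otimes>\<^bsub>A P\<^esub> \<phi> P (bclass n P (key_word (last xs, butlast xs))) [^]\<^bsub>A P\<^esub> ((-1::int) ^ Suc n)"
    using hom_bclass_add[OF A_group h] hom_bclass_cmul[OF A_group h last] first last l
      HomB_merge_faces(1)[OF \<phi> l, folded P_def]
    by (simp add: bar_diff_word_std_word[OF xs] bfree_add bfree_cmul)
  also have "\<dots> = act (prod_list xs') v (std_cochain n \<phi> xs')
        \<otimes>\<^bsub>A P\<^esub> (\<Otimes>\<^bsub>A P\<^esub> i\<in>{1..n}. std_cochain n \<phi> (merge_at i xs) [^]\<^bsub>A P\<^esub> ((-1::int) ^ i))
        \<otimes>\<^bsub>A P\<^esub> act (prod_list (butlast xs)) (last xs) (std_cochain n \<phi> (butlast xs)) [^]\<^bsub>A P\<^esub> ((-1::int) ^ Suc n)"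
    using HomB_key_word[OF \<phi> lxs', of v, folded P_first] HomB_key_word[OF \<phi> lbl, of "last xs", folded P_last]
    unfolding HomB_merge_faces(2)[OF \<phi> l, folded P_def] by (simp add: key_value_def)
  finally show ?thesis
    using l n xs by (simp add: Cdiff_def P_def merge_at_def)
qed

lemma std_cochain_HomB_diff:
  assumes \<phi>: "\<phi> \<in> carrier (HomB A act n)"
  shows "std_cochain (Suc n) (HomB_diff A n \<phi>) = Cdiff A act n (std_cochain n \<phi>)"
proof (rule ext)
  fix xs :: "'m list"
  show "std_cochain (Suc n) (HomB_diff A n \<phi>) xs = Cdiff A act n (std_cochain n \<phi>) xs"
  proof (cases "length xs = Suc n")
    case False
    then show ?thesis by (simp add: std_cochain_def Cdiff_def Ccoch_def)
  next
    case l: True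
    define P where "P = prod_list xs"
    have gen: "frag_of (std_word xs) \<in> carrier (bfree (Suc n) P)" by (rule bfree_of[OF std_word_bwords[OF l, folded P_def]])
    have "std_cochain (Suc n) (HomB_diff A n \<phi>) xs = \<phi> P (bclass n P (bar_diff_word (std_word xs)))"
      using l bclass_carrier[OF gen] BZM_diff_class[OF gen] by (simp add: std_cochain_def HomB_diff_def P_def bar_diff_def)
    moreover have "\<phi> P (bclass n P (bar_diff_word (std_word xs))) = \<one>\<^bsub>A P\<^esub>" if "n = 0"
      using bar_diff_word_0[OF std_word_bwords[OF l, unfolded that]] hom_bclass_0[OF A_group, of "\<phi> P"] \<phi> that
      by (simp add: HomB_carrier_iff)
    ultimately show ?thesis
      using HomB_bar_diff_std_word[OF \<phi> l] l by (cases "n = 0") (simp_all add: Cdiff_def Ccoch_def P_def)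
  qed
qed

end

theorem theorem5p2:
  fixes A :: "'m::comm_monoid_mult \<Rightarrow> 'a monoid" and act :: "'m \<Rightarrow> 'm \<Rightarrow> 'a \<Rightarrow> 'a" and n :: nat
  assumes "HM_module A act"
  shows "H_M1 A act n \<cong> C_M1 A act n"
proof -
  interpret hm_module A act by (rule hm_module.intro) (rule assms)
  show ?thesis
    unfolding H_M1_def C_M1_def
    using std_cochain_bij std_cochain_mult HomB_closed std_cochain_HomB_diff HomB_diff_carrier
      HomB_one_carrier std_cochain_one
    by (intro cohomology_iso_chain_bij[where F = std_cochain]) auto
qed

end
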